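(* For a mutually orthogonal $d$-dimensional pure-state ensemble $\Omega=\{(1/k,|\psi_i\rangle)\}_{i=0}^{k-1}$ with $k<d$, a necessary condition for $\Omega$ to saturate $\mathbf{C}_{\mathrm{MIO}}(\Omega)+\mathbf{S}(\Omega)=\log_2 d$ is \[ C_{\max}(\hat\omega)+S(\hat\omega)=\log_2 d, \] where $\hat\omega=\frac1k\sum_{i=0}^{k-1}|\psi_i\rangle\langle\psi_i|$.
   Context: Incoherent states $\mathcal{I}$ are diagonal in the computational basis; MIO are channels mapping $\mathcal{I}$ into itself. $C_R(\rho)=\min\{s\ge0:(\rho+s\tau)/(1+s)\in\mathcal{I}\text{ for some state }\tau\}$ is the robustness of coherence and $C_{\max}(\rho)=\log_2(1+C_R(\rho))=\min_{\sigma\in\mathcal{I}}D_{\max}(\rho\|\sigma)$ is the max-relative entropy of coherence. $\mathbf{C}_{\mathrm{MIO}}(\Omega)=\log_2(1+\eta)$, $\eta=\max\sum_jp_jC_R(\sigma_j)$ over MIO channels $\mathcal{N}_{A\to BA'}$ ($\dim B=k$, $A'\cong A$) with $\sigma_j=\mathrm{tr}_B[\mathcal{N}(\rho_j)]$ and $\sum_jp_j\mathrm{tr}[\mathcal{N}(\rho_j)(|j\rangle\langle j|_B\otimes I_{A'})]=P_{\mathrm{suc}}(\Omega)$ (optimal POVM discrimination probability). $\mathbf{S}(\Omega)=S(\hat\omega)$, the von Neumann entropy of the average state. *)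

theory Defs
  imports "Jordan_Normal_Form.Matrix" "Jordan_Normal_Form.Char_Poly"
begin

definition tr :: "complex mat \<Rightarrow> complex" where
  "tr A = (\<Sum>i<dim_row A. A $$ (i,i))"

definition adj :: "complex mat \<Rightarrow> complex mat" where
  "adj A = mat (dim_col A) (dim_row A) (\<lambda>(i,j). cnj (A $$ (j,i)))"

definition psd :: "nat \<Rightarrow> complex mat \<Rightarrow> bool" where
  "psd n A \<longleftrightarrow> A \<in> carrier_mat n n \<and>
     (\<forall>v \<in> carrier_vec n. Im (map_vec cnj v \<bullet> (A *\<^sub>v v)) = 0 \<and>
                           Re (map_vec cnj v \<bullet> (A *\<^sub>v v)) \<ge> 0)"

definition density :: "nat \<Rightarrow> complex mat \<Rightarrow> bool" where
  "density n \<rho> \<longleftrightarrow> psd n \<rho> \<and> tr \<rho> = 1"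

definition incoherent :: "nat \<Rightarrow> complex mat \<Rightarrow> bool" where
  "incoherent n \<rho> \<longleftrightarrow> density n \<rho> \<and> (\<forall>i<n. \<forall>j<n. i \<noteq> j \<longrightarrow> \<rho> $$ (i,j) = 0)"

definition proj :: "complex vec \<Rightarrow> complex mat" where
  "proj \<psi> = mat (dim_vec \<psi>) (dim_vec \<psi>) (\<lambda>(i,j). \<psi> $ i * cnj (\<psi> $ j))"

definition kraus_map :: "nat \<Rightarrow> complex mat list \<Rightarrow> complex mat \<Rightarrow> complex mat" where
  "kraus_map n Ks \<rho> = foldr (\<lambda>K acc. K * \<rho> * adj K + acc) Ks (0\<^sub>m n n)"

definition channel :: "nat \<Rightarrow> nat \<Rightarrow> (complex mat \<Rightarrow> complex mat) \<Rightarrow> bool" where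
  "channel m n N \<longleftrightarrow> (\<exists>Ks. Ks \<noteq> [] \<and> (\<forall>K \<in> set Ks. K \<in> carrier_mat n m) \<and>
       foldr (\<lambda>K acc. adj K * K + acc) Ks (0\<^sub>m m m) = 1\<^sub>m m \<and>
       (\<forall>\<rho> \<in> carrier_mat m m. N \<rho> = kraus_map n Ks \<rho>))"

definition MIO :: "nat \<Rightarrow> nat \<Rightarrow> (complex mat \<Rightarrow> complex mat) \<Rightarrow> bool" where
  "MIO m n N \<longleftrightarrow> channel m n N \<and> (\<forall>\<rho>. incoherent m \<rho> \<longrightarrow> incoherent n (N \<rho>))"

definition robustness :: "nat \<Rightarrow> complex mat \<Rightarrow> real" where
  "robustness n \<rho> = Inf {s. s \<ge> 0 \<and> (\<exists>\<tau>. density n \<tau> \<and>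
        incoherent n ((1 / (1 + complex_of_real s)) \<cdot>\<^sub>m (\<rho> + complex_of_real s \<cdot>\<^sub>m \<tau>)))}"

definition C_max :: "nat \<Rightarrow> complex mat \<Rightarrow> real" where
  "C_max n \<rho> = log 2 (1 + robustness n \<rho>)"

definition eigvals :: "nat \<Rightarrow> complex mat \<Rightarrow> complex list" where
  "eigvals n A = (SOME as. char_poly A = (\<Prod>a \<leftarrow> as. [:- a, 1:]) \<and> length as = n)"

definition vN_entropy :: "nat \<Rightarrow> complex mat \<Rightarrow> real" where
  "vN_entropy n \<rho> = sum_list (map (\<lambda>a. if Re a = 0 then 0 else - Re a * log 2 (Re a)) (eigvals n \<rho>))"

text \<open>An ensemble is given by a probability vector p and states rho, indexed by j < k,
  acting on dimension d.\<close>

definition avg_state :: "nat \<Rightarrow> nat \<Rightarrow> (nat \<Rightarrow> real) \<Rightarrow> (nat \<Rightarrow> complex mat) \<Rightarrow> complex mat" where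
  "avg_state k d p \<rho> = mat d d (\<lambda>(a,b). \<Sum>j<k. complex_of_real (p j) * \<rho> j $$ (a,b))"

definition POVM :: "nat \<Rightarrow> nat \<Rightarrow> (nat \<Rightarrow> complex mat) \<Rightarrow> bool" where
  "POVM k d M \<longleftrightarrow> (\<forall>j<k. psd d (M j)) \<and> mat d d (\<lambda>(a,b). \<Sum>j<k. M j $$ (a,b)) = 1\<^sub>m d"

definition P_suc :: "nat \<Rightarrow> nat \<Rightarrow> (nat \<Rightarrow> real) \<Rightarrow> (nat \<Rightarrow> complex mat) \<Rightarrow> real" where
  "P_suc k d p \<rho> = Sup {(\<Sum>j<k. p j * Re (tr (M j * \<rho> j))) | M. POVM k d M}"

text \<open>Output of N : A -> B A' lives on dimension k*d, with the B index (dimension k) as the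
  leading tensor factor: basis |j>_B |a>_{A'} has index j*d + a.\<close>

definition ptrace_B :: "nat \<Rightarrow> nat \<Rightarrow> complex mat \<Rightarrow> complex mat" where
  "ptrace_B k d X = mat d d (\<lambda>(a,b). \<Sum>j<k. X $$ (j*d + a, j*d + b))"

text \<open>tr[X (|j><j|_B tensor I_{A'})].\<close>
definition tr_proj_B :: "nat \<Rightarrow> nat \<Rightarrow> complex mat \<Rightarrow> complex" where
  "tr_proj_B d j X = (\<Sum>a<d. X $$ (j*d + a, j*d + a))"

definition eta_MIO :: "nat \<Rightarrow> nat \<Rightarrow> (nat \<Rightarrow> real) \<Rightarrow> (nat \<Rightarrow> complex mat) \<Rightarrow> real" where
  "eta_MIO k d p \<rho> = Sup {(\<Sum>j<k. p j * robustness d (ptrace_B k d (N (\<rho> j)))) | N.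
       MIO d (k*d) N \<and>
       (\<Sum>j<k. p j * Re (tr_proj_B d j (N (\<rho> j)))) = P_suc k d p \<rho>}"

definition C_MIO_ens :: "nat \<Rightarrow> nat \<Rightarrow> (nat \<Rightarrow> real) \<Rightarrow> (nat \<Rightarrow> complex mat) \<Rightarrow> real" where
  "C_MIO_ens k d p \<rho> = log 2 (1 + eta_MIO k d p \<rho>)"

definition S_ens :: "nat \<Rightarrow> nat \<Rightarrow> (nat \<Rightarrow> real) \<Rightarrow> (nat \<Rightarrow> complex mat) \<Rightarrow> real" where
  "S_ens k d p \<rho> = vN_entropy d (avg_state k d p \<rho>)"

end

theory Submission
  imports Defs "Jordan_Normal_Form.Schur_Decomposition"
begin

text \<open>Write \<omega> = P/k, where P projects onto the span of the \<psi>_i; then \<omega>^2 = \<omega>/k and S(\<omega>) = log k.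
  A MIO channel that discriminates the orthogonal ensemble perfectly must send \<psi>_j into the j-th
  diagonal block of its output. Pushing a robustness witness (s, \<tau>) of \<omega> through the channel and
  restricting to these blocks yields witnesses for the reduced states \<sigma>_j whose weights average
  to at most s; hence \<eta> \<le> R(\<omega>). The witness \<tau> = (I - P)/(d - k) gives R(\<omega>) \<le> d/k - 1.
  Saturation says 1 + \<eta> = d/k, so R(\<omega>) = \<eta> and C_max(\<omega>) + S(\<omega>) = log d.\<close>

subsection \<open>Positive semidefinite matrices\<close>

definition quad_form :: "nat \<Rightarrow> complex mat \<Rightarrow> complex vec \<Rightarrow> complex" where
  "quad_form n X v = (\<Sum>a<n. \<Sum>b<n. cnj (v$a) * X$$(a,b) * v$b)"

lemma cscalar_prod_mult_mat_vec_eq_quad_form: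
  assumes "X \<in> carrier_mat n n" "v \<in> carrier_vec n"
  shows "map_vec cnj v \<bullet> (X *\<^sub>v v) = quad_form n X v"
  using assms unfolding quad_form_def scalar_prod_def
  by (auto simp: sum_distrib_left mult.assoc atLeast0LessThan scalar_prod_def intro!: sum.cong)

lemma psd_iff_quad_form:
  "psd n X \<longleftrightarrow> X \<in> carrier_mat n n \<and> (\<forall>v\<in>carrier_vec n. 0 \<le> quad_form n X v)"
  by (auto simp: psd_def cscalar_prod_mult_mat_vec_eq_quad_form less_eq_complex_def)

lemma quad_form_eq_sum_inner:
  "quad_form n X v = (\<Sum>a<n. cnj (v$a) * (\<Sum>b<n. X$$(a,b) * v$b))"
  by (simp add: quad_form_def sum_distrib_left mult.assoc)

lemma quad_form_sum:
  assumes "\<And>a b. a<n \<Longrightarrow> b<n \<Longrightarrow> X$$(a,b) = (\<Sum>i<m. M i $$ (a,b))"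
  shows "quad_form n X v = (\<Sum>i<m. quad_form n (M i) v)"
proof -
  have "quad_form n X v = (\<Sum>a<n. \<Sum>b<n. \<Sum>i<m. cnj (v$a) * M i $$ (a,b) * v$b)"
    unfolding quad_form_def by (auto simp: assms sum_distrib_left sum_distrib_right intro!: sum.cong)
  also have "\<dots> = (\<Sum>i<m. quad_form n (M i) v)"
    unfolding quad_form_def by (simp only: sum.swap[where A="{..<n}" and B="{..<m}"])
  finally show ?thesis .
qed

lemma quad_form_add:
  assumes "A \<in> carrier_mat n n" "B \<in> carrier_mat n n"
  shows "quad_form n (A + B) v = quad_form n A v + quad_form n B v"
  using assms by (auto simp: quad_form_def algebra_simps sum.distrib intro!: sum.cong)

lemma quad_form_smult:
  assumes "A \<in> carrier_mat n n"
  shows "quad_form n (c \<cdot>\<^sub>m A) v = c * quad_form n A v"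
  using assms by (auto simp: quad_form_def sum_distrib_left mult_ac intro!: sum.cong)

lemma quad_form_unit_vec:
  assumes a: "a < n"
  shows "quad_form n X (vec n (\<lambda>i. if i = a then 1 else 0)) = X$$(a,a)"
proof -
  let ?v = "vec n (\<lambda>i. if i = a then 1 else (0::complex))"
  have "(\<Sum>b<n. X$$(i,b) * ?v$b) = X$$(i,a)" if "i < n" for i
  proof -
    have "(\<Sum>b<n. X$$(i,b) * ?v$b) = (\<Sum>b<n. if b = a then X$$(i,a) else 0)"
      by (intro sum.cong) auto
    then show ?thesis using a by simp
  qed
  then have "quad_form n X ?v = (\<Sum>i<n. if i = a then X$$(a,a) else 0)"
    unfolding quad_form_eq_sum_inner by (intro sum.cong) auto
  also have "\<dots> = X$$(a,a)" using a by simp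
  finally show ?thesis .
qed

lemma sum_if_two_points:
  assumes "finite S" "a \<in> S" "b \<in> S" "a \<noteq> b"
  shows "(\<Sum>i\<in>S. if i = a then p else if i = b then q else 0) = p + (q::complex)"
proof -
  have "(\<Sum>i\<in>S. if i = a then p else if i = b then q else 0)
      = (\<Sum>i\<in>S. (if i = a then p else 0) + (if i = b then q else 0))"
    using assms by (intro sum.cong) auto
  also have "\<dots> = p + q" using assms by (simp add: sum.distrib)
  finally show ?thesis .
qed

lemma quad_form_two_point_vec:
  assumes "a < n" "b < n" "a \<noteq> b"
  shows "quad_form n X (vec n (\<lambda>i. if i = a then \<alpha> else if i = b then \<beta> else 0)) =
     cnj \<alpha> * X$$(a,a) * \<alpha> + cnj \<alpha> * X$$(a,b) * \<beta> + (cnj \<beta> * X$$(b,a) * \<alpha> + cnj \<beta> * X$$(b,b) * \<beta>)"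
proof -
  have "quad_form n X (vec n (\<lambda>i. if i = a then \<alpha> else if i = b then \<beta> else 0)) =
    (\<Sum>i<n. if i = a then (\<Sum>j<n. if j = a then cnj \<alpha> * X$$(a,a) * \<alpha> else if j = b then cnj \<alpha> * X$$(a,b) * \<beta> else 0)
      else if i = b then (\<Sum>j<n. if j = a then cnj \<beta> * X$$(b,a) * \<alpha> else if j = b then cnj \<beta> * X$$(b,b) * \<beta> else 0) else 0)"
    using assms by (auto simp: quad_form_def intro!: sum.cong)
  also have "\<dots> = cnj \<alpha> * X$$(a,a) * \<alpha> + cnj \<alpha> * X$$(a,b) * \<beta> + (cnj \<beta> * X$$(b,a) * \<alpha> + cnj \<beta> * X$$(b,b) * \<beta>)"
    using assms by (simp add: sum_if_two_points)
  finally show ?thesis .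
qed

lemma cnj_mult_self_nonneg: "0 \<le> cnj z * (z::complex)"
  by (simp add: less_eq_complex_def)

lemma psd_gram:
  fixes Y :: "'c \<Rightarrow> nat \<Rightarrow> complex"
  assumes X: "X \<in> carrier_mat n n" and C: "finite C"
    and e: "\<And>a b. a<n \<Longrightarrow> b<n \<Longrightarrow> X$$(a,b) = (\<Sum>c\<in>C. cnj (Y c a) * Y c b)"
  shows "psd n X"
  unfolding psd_iff_quad_form
proof (intro conjI X ballI)
  fix v :: "complex vec"
  have "quad_form n X v = (\<Sum>a<n. \<Sum>b<n. \<Sum>c\<in>C. (cnj (Y c a) * cnj (v$a)) * (Y c b * v$b))"
    by (auto simp: quad_form_def e sum_distrib_left sum_distrib_right mult_ac intro!: sum.cong)
  also have "\<dots> = (\<Sum>c\<in>C. \<Sum>a<n. \<Sum>b<n. (cnj (Y c a) * cnj (v$a)) * (Y c b * v$b))"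
    by (simp only: sum.swap[where A="{..<n}" and B=C])
  also have "\<dots> = (\<Sum>c\<in>C. cnj (\<Sum>a<n. Y c a * v$a) * (\<Sum>b<n. Y c b * v$b))"
    by (simp add: sum_product cnj_sum)
  finally have eq: "quad_form n X v = (\<Sum>c\<in>C. cnj (\<Sum>a<n. Y c a * v$a) * (\<Sum>b<n. Y c b * v$b))" .
  show "0 \<le> quad_form n X v" unfolding eq by (intro sum_nonneg cnj_mult_self_nonneg)
qed

lemma psd_add: "psd n A \<Longrightarrow> psd n B \<Longrightarrow> psd n (A + B)"
  by (auto simp: psd_iff_quad_form quad_form_add add_nonneg_nonneg)

lemma psd_smult:
  assumes A: "psd n A" and c: "0 \<le> c"
  shows "psd n (complex_of_real c \<cdot>\<^sub>m A)"
  unfolding psd_iff_quad_form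
proof (intro conjI ballI)
  show "complex_of_real c \<cdot>\<^sub>m A \<in> carrier_mat n n" using A by (simp add: psd_def)
  fix v :: "complex vec" assume "v \<in> carrier_vec n"
  then have "0 \<le> quad_form n A v" using A by (simp add: psd_iff_quad_form)
  moreover have "0 \<le> complex_of_real c" using c by (simp add: less_eq_complex_def)
  ultimately show "0 \<le> quad_form n (complex_of_real c \<cdot>\<^sub>m A) v"
    using A by (simp add: quad_form_smult psd_def mult_nonneg_nonneg)
qed

lemma psd_diag_nonneg: "psd n X \<Longrightarrow> a < n \<Longrightarrow> 0 \<le> X$$(a,a)"
  using quad_form_unit_vec[of a n X] unfolding psd_iff_quad_form by (metis vec_carrier)

lemma psd_tr_nonneg: "psd n X \<Longrightarrow> 0 \<le> tr X"
  by (auto simp: tr_def psd_def intro!: sum_nonneg psd_diag_nonneg)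

lemma nonneg_complex_eq_of_real_Re: "0 \<le> (z::complex) \<Longrightarrow> z = complex_of_real (Re z)"
  by (simp add: less_eq_complex_def complex_eq_iff)

lemma complex_affine_nonneg_imp_zero:
  assumes h: "\<And>t::real. 0 \<le> A + complex_of_real t * B"
  shows "B = 0"
proof -
  from h[of 0] have A: "Im A = 0" "Re A \<ge> 0" by (auto simp: less_eq_complex_def)
  from h[of 1] A have IB: "Im B = 0" by (auto simp: less_eq_complex_def)
  have "Re B = 0"
  proof (rule ccontr)
    assume nz: "Re B \<noteq> 0"
    from h[of "- (Re A + 1) / Re B"] have "0 \<le> Re A + (- (Re A + 1) / Re B) * Re B"
      by (auto simp: less_eq_complex_def)
    with nz show False by simp
  qed
  with IB show ?thesis by (simp add: complex_eq_iff)
qed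

text \<open>A vanishing diagonal entry forces its whole row and column to vanish: otherwise a
  two-point test vector makes the quadratic form an affine, non-constant function of a real
  parameter.\<close>
lemma psd_diag_zero_imp_zero:
  assumes X: "psd n X" and a: "a<n" and b: "b<n" and z: "X$$(a,a) = 0"
  shows "X$$(a,b) = 0 \<and> X$$(b,a) = 0"
proof (cases "a = b")
  case True then show ?thesis using z by simp
next
  case False
  have key: "0 \<le> cnj c * X$$(a,b) + X$$(b,a) * c + X$$(b,b)" for c
  proof -
    have "0 \<le> quad_form n X (vec n (\<lambda>i. if i = a then c else if i = b then 1 else 0))"
      using X unfolding psd_iff_quad_form by (metis vec_carrier)
    also have "\<dots> = cnj c * X$$(a,b) + X$$(b,a) * c + X$$(b,b)"
      using quad_form_two_point_vec[OF a b False, of X c 1] z by simp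
    finally show ?thesis .
  qed
  have s: "X$$(a,b) + X$$(b,a) = 0"
  proof (rule complex_affine_nonneg_imp_zero[of "X$$(b,b)"])
    fix t :: real
    show "0 \<le> X$$(b,b) + complex_of_real t * (X$$(a,b) + X$$(b,a))"
      using key[of "complex_of_real t"] by (simp add: algebra_simps)
  qed
  have "\<i> * (X$$(b,a) - X$$(a,b)) = 0"
  proof (rule complex_affine_nonneg_imp_zero[of "X$$(b,b)"])
    fix t :: real
    show "0 \<le> X$$(b,b) + complex_of_real t * (\<i> * (X$$(b,a) - X$$(a,b)))"
      using key[of "\<i> * complex_of_real t"] by (simp add: algebra_simps)
  qed
  with s show ?thesis by (auto simp: algebra_simps)
qed

lemma psd_tr_zero_imp_zero:
  assumes X: "psd n X" and t: "tr X = 0"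
  shows "X = 0\<^sub>m n n"
proof -
  have c: "X \<in> carrier_mat n n" using X by (simp add: psd_def)
  have "(\<Sum>a<n. X$$(a,a)) = 0" using t c by (simp add: tr_def)
  then have diag: "X$$(a,a) = 0" if "a < n" for a
    using that psd_diag_nonneg[OF X] by (subst (asm) sum_nonneg_eq_0_iff) auto
  show ?thesis
  proof (rule eq_matI)
    fix a b assume "a < dim_row (0\<^sub>m n n :: complex mat)" "b < dim_col (0\<^sub>m n n :: complex mat)"
    then have ab: "a < n" "b < n" by auto
    show "X $$ (a,b) = 0\<^sub>m n n $$ (a,b)"
      using psd_diag_zero_imp_zero[OF X ab diag[OF ab(1)]] ab by simp
  qed (use c in auto)
qed

lemma sum_lessThan_reindex_inj:
  fixes f :: "nat \<Rightarrow> nat" and h :: "nat \<Rightarrow> 'z::comm_monoid_add"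
  assumes "inj_on f {..<m}" "f ` {..<m} \<subseteq> {..<n}" "\<And>x. x<n \<Longrightarrow> x \<notin> f`{..<m} \<Longrightarrow> h x = 0"
  shows "(\<Sum>x<n. h x) = (\<Sum>a<m. h (f a))"
proof -
  have "(\<Sum>x<n. h x) = (\<Sum>x\<in>f`{..<m}. h x)"
    using assms by (intro sum.mono_neutral_right) auto
  also have "\<dots> = (\<Sum>a<m. h (f a))" using assms(1) by (simp add: sum.reindex)
  finally show ?thesis .
qed

lemma psd_submatrix:
  assumes X: "psd n X" and Y: "Y \<in> carrier_mat m m"
    and f: "inj_on f {..<m}" "f ` {..<m} \<subseteq> {..<n}"
    and e: "\<And>a b. a<m \<Longrightarrow> b<m \<Longrightarrow> Y$$(a,b) = X$$(f a, f b)"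
  shows "psd m Y"
  unfolding psd_iff_quad_form
proof (intro conjI Y ballI)
  fix v :: "complex vec"
  define w where "w = vec n (\<lambda>x. if x \<in> f`{..<m} then v $ (the_inv_into {..<m} f x) else 0)"
  have wf: "w $ (f a) = v $ a" if "a < m" for a
    using that f unfolding w_def by (auto simp: the_inv_into_f_f)
  have w0: "w $ x = 0" if "x < n" "x \<notin> f`{..<m}" for x
    using that unfolding w_def by auto
  have inner: "(\<Sum>y<n. cnj (w$x) * X$$(x,y) * w$y) = (\<Sum>b<m. cnj (w$x) * X$$(x,f b) * v$b)" for x
    by (subst sum_lessThan_reindex_inj[OF f]) (auto simp: w0 wf)
  have "quad_form n X w = (\<Sum>x<n. \<Sum>b<m. cnj (w$x) * X$$(x,f b) * v$b)"
    unfolding quad_form_def inner ..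
  also have "\<dots> = (\<Sum>a<m. \<Sum>b<m. cnj (w$(f a)) * X$$(f a,f b) * v$b)"
    by (subst sum_lessThan_reindex_inj[OF f]) (auto simp: w0)
  also have "\<dots> = quad_form m Y v"
    by (auto simp: wf e quad_form_def intro!: sum.cong)
  finally show "0 \<le> quad_form m Y v"
    using X unfolding psd_iff_quad_form w_def by (metis vec_carrier)
qed

lemma psd_diagonal:
  assumes X: "X \<in> carrier_mat n n"
    and off: "\<And>a b. a<n \<Longrightarrow> b<n \<Longrightarrow> a \<noteq> b \<Longrightarrow> X$$(a,b) = 0"
    and dg: "\<And>a. a<n \<Longrightarrow> 0 \<le> X$$(a,a)"
  shows "psd n X"
  unfolding psd_iff_quad_form
proof (intro conjI X ballI)
  fix v :: "complex vec"
  have row: "(\<Sum>b<n. cnj (v$a) * X$$(a,b) * v$b) = X$$(a,a) * (cnj (v$a) * v$a)" if a: "a<n" for a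
  proof -
    have "(\<Sum>b<n. cnj (v$a) * X$$(a,b) * v$b) = (\<Sum>b<n. if b = a then cnj (v$a) * X$$(a,a) * v$a else 0)"
      using a off by (intro sum.cong) auto
    then show ?thesis using a by simp
  qed
  have "quad_form n X v = (\<Sum>a<n. X$$(a,a) * (cnj (v$a) * v$a))"
    unfolding quad_form_def by (intro sum.cong) (auto simp: row)
  also have "0 \<le> \<dots>"
    using dg by (intro sum_nonneg mult_nonneg_nonneg cnj_mult_self_nonneg) auto
  finally show "0 \<le> quad_form n X v" .
qed

lemma tr_add: "A \<in> carrier_mat n n \<Longrightarrow> B \<in> carrier_mat n n \<Longrightarrow> tr (A + B) = tr A + tr B"
  by (simp add: tr_def sum.distrib)

lemma tr_smult: "A \<in> carrier_mat n n \<Longrightarrow> tr (c \<cdot>\<^sub>m A) = c * tr A"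
  by (simp add: tr_def sum_distrib_left)

lemma tr_mult_comm:
  assumes "A \<in> carrier_mat n m" "B \<in> carrier_mat m n"
  shows "tr (A * B) = tr (B * A)"
proof -
  have "tr (A * B) = (\<Sum>i<n. \<Sum>j<m. A$$(i,j) * B$$(j,i))"
    using assms by (auto simp: tr_def scalar_prod_def atLeast0LessThan intro!: sum.cong)
  also have "\<dots> = (\<Sum>j<m. \<Sum>i<n. B$$(j,i) * A$$(i,j))"
    by (subst sum.swap) (simp add: mult.commute)
  also have "\<dots> = tr (B * A)"
    using assms by (auto simp: tr_def scalar_prod_def atLeast0LessThan intro!: sum.cong)
  finally show ?thesis .
qed

subsection \<open>Channels in Kraus form\<close>

lemma adj_carrier: "K \<in> carrier_mat n m \<Longrightarrow> adj K \<in> carrier_mat m n"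
  by (simp add: adj_def)

lemma kraus_map_carrier_entry:
  assumes "\<forall>K\<in>set Ks. K \<in> carrier_mat n m" "\<rho> \<in> carrier_mat m m"
  shows "kraus_map n Ks \<rho> \<in> carrier_mat n n \<and> (\<forall>x<n. \<forall>y<n. kraus_map n Ks \<rho> $$ (x,y) =
     (\<Sum>K\<leftarrow>Ks. \<Sum>a<m. \<Sum>b<m. K$$(x,a) * \<rho>$$(a,b) * cnj (K$$(y,b))))"
  using assms(1)
proof (induction Ks)
  case Nil
  then show ?case by (simp add: kraus_map_def)
next
  case (Cons K Ks)
  have K: "K \<in> carrier_mat n m" using Cons by simp
  have eq: "kraus_map n (K#Ks) \<rho> = K * \<rho> * adj K + kraus_map n Ks \<rho>"
    by (simp add: kraus_map_def)
  have "K * \<rho> * adj K \<in> carrier_mat n n" using K assms(2) adj_carrier[OF K] by auto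
  moreover have "(K * \<rho> * adj K) $$ (x,y) = (\<Sum>a<m. \<Sum>b<m. K$$(x,a) * \<rho>$$(a,b) * cnj (K$$(y,b)))"
    if "x<n" "y<n" for x y
    using that K assms(2) adj_carrier[OF K]
    by (auto simp: scalar_prod_def adj_def sum_distrib_right atLeast0LessThan intro: sum.swap)
  ultimately show ?case unfolding eq using Cons by auto
qed

lemma kraus_completeness_carrier_entry:
  assumes "\<forall>K\<in>set Ks. K \<in> carrier_mat n m"
  shows "foldr (\<lambda>K acc. adj K * K + acc) Ks (0\<^sub>m m m) \<in> carrier_mat m m \<and> (\<forall>a<m. \<forall>b<m.
     foldr (\<lambda>K acc. adj K * K + acc) Ks (0\<^sub>m m m) $$ (a,b) = (\<Sum>K\<leftarrow>Ks. \<Sum>x<n. cnj (K$$(x,a)) * K$$(x,b)))"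
  using assms
proof (induction Ks)
  case Nil
  then show ?case by simp
next
  case (Cons K Ks)
  have K: "K \<in> carrier_mat n m" using Cons by simp
  have "adj K * K \<in> carrier_mat m m" using K adj_carrier[OF K] by auto
  moreover have "(adj K * K) $$ (a,b) = (\<Sum>x<n. cnj (K$$(x,a)) * K$$(x,b))" if "a<m" "b<m" for a b
    using that K adj_carrier[OF K] by (auto simp: scalar_prod_def adj_def atLeast0LessThan)
  ultimately show ?case using Cons by auto
qed

locale kraus_channel =
  fixes m n r :: nat and N :: "complex mat \<Rightarrow> complex mat" and \<kappa> :: "nat \<Rightarrow> complex mat"
  assumes out_carrier: "\<And>\<rho>. \<rho> \<in> carrier_mat m m \<Longrightarrow> N \<rho> \<in> carrier_mat n n"
    and out_entry: "\<And>\<rho> x y. \<rho> \<in> carrier_mat m m \<Longrightarrow> x<n \<Longrightarrow> y<n \<Longrightarrow> N \<rho> $$ (x,y) =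
        (\<Sum>i<r. \<Sum>a<m. \<Sum>b<m. \<kappa> i $$ (x,a) * \<rho>$$(a,b) * cnj (\<kappa> i $$ (y,b)))"
    and completeness: "\<And>a b. a<m \<Longrightarrow> b<m \<Longrightarrow>
        (\<Sum>i<r. \<Sum>x<n. cnj (\<kappa> i $$ (x,a)) * \<kappa> i $$ (x,b)) = (if a = b then 1 else 0)"
begin

lemma tr_preserving:
  assumes \<rho>: "\<rho> \<in> carrier_mat m m"
  shows "tr (N \<rho>) = tr \<rho>"
proof -
  have "tr (N \<rho>) = (\<Sum>x<n. \<Sum>i<r. \<Sum>a<m. \<Sum>b<m. \<rho>$$(a,b) * (cnj (\<kappa> i $$ (x,b)) * \<kappa> i $$ (x,a)))"
    using out_carrier[OF \<rho>] by (auto simp: tr_def out_entry[OF \<rho>] mult_ac intro!: sum.cong)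
  also have "\<dots> = (\<Sum>a<m. \<Sum>b<m. \<Sum>i<r. \<Sum>x<n. \<rho>$$(a,b) * (cnj (\<kappa> i $$ (x,b)) * \<kappa> i $$ (x,a)))"
    by (simp only: sum.swap[where A="{..<n}" and B="{..<r}"] sum.swap[where A="{..<n}" and B="{..<m}"]
        sum.swap[where A="{..<r}" and B="{..<m}"])
  also have "\<dots> = (\<Sum>a<m. \<Sum>b<m. \<rho>$$(a,b) * (\<Sum>i<r. \<Sum>x<n. cnj (\<kappa> i $$ (x,b)) * \<kappa> i $$ (x,a)))"
    by (simp add: sum_distrib_left)
  also have "\<dots> = (\<Sum>a<m. \<Sum>b<m. if b = a then \<rho>$$(a,b) else 0)"
    by (intro sum.cong refl) (simp add: completeness)
  also have "\<dots> = tr \<rho>" using \<rho> by (simp add: tr_def)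
  finally show ?thesis .
qed

lemma psd_preserving:
  assumes \<rho>: "psd m \<rho>"
  shows "psd n (N \<rho>)"
proof -
  have \<rho>c: "\<rho> \<in> carrier_mat m m" using \<rho> by (simp add: psd_def)
  show ?thesis unfolding psd_iff_quad_form
  proof (intro conjI out_carrier[OF \<rho>c] ballI)
    fix v :: "complex vec"
    define w where "w i = vec m (\<lambda>a. \<Sum>x<n. cnj (\<kappa> i $$ (x,a)) * v$x)" for i
    have "quad_form n (N \<rho>) v = (\<Sum>x<n. \<Sum>y<n. \<Sum>i<r. \<Sum>a<m. \<Sum>b<m.
        (\<kappa> i $$ (x,a) * cnj (v$x)) * \<rho>$$(a,b) * (cnj (\<kappa> i $$ (y,b)) * v$y))"
      unfolding quad_form_def
      by (intro sum.cong refl) (simp add: out_entry[OF \<rho>c] sum_distrib_left sum_distrib_right mult_ac)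
    also have "\<dots> = (\<Sum>i<r. \<Sum>a<m. \<Sum>b<m. \<Sum>x<n. \<Sum>y<n.
        (\<kappa> i $$ (x,a) * cnj (v$x)) * \<rho>$$(a,b) * (cnj (\<kappa> i $$ (y,b)) * v$y))"
      by (simp only: sum.swap[where A="{..<n}" and B="{..<r}"] sum.swap[where A="{..<n}" and B="{..<m}"])
    also have "\<dots> = (\<Sum>i<r. quad_form m \<rho> (w i))"
      unfolding quad_form_def w_def
      by (intro sum.cong refl) (simp add: cnj_sum sum_distrib_left sum_distrib_right mult_ac)
    finally show "0 \<le> quad_form n (N \<rho>) v"
      using \<rho> unfolding psd_iff_quad_form w_def by (auto intro: sum_nonneg)
  qed
qed

lemma density_preserving: "density m \<rho> \<Longrightarrow> density n (N \<rho>)"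
  using psd_preserving tr_preserving by (auto simp: density_def psd_def)

lemma entry_lincomb2:
  assumes A: "A \<in> carrier_mat m m" and B: "B \<in> carrier_mat m m" and C: "C \<in> carrier_mat m m"
    and e: "\<And>a b. a<m \<Longrightarrow> b<m \<Longrightarrow> C$$(a,b) = \<alpha> * A$$(a,b) + \<beta> * B$$(a,b)"
    and xy: "x<n" "y<n"
  shows "N C $$ (x,y) = \<alpha> * N A $$ (x,y) + \<beta> * N B $$ (x,y)"
  using xy by (auto simp: out_entry[OF A] out_entry[OF B] out_entry[OF C] e sum_distrib_left
      algebra_simps sum.distrib intro!: sum.cong)

lemma entry_lincomb:
  assumes A: "\<And>j. j<k \<Longrightarrow> A j \<in> carrier_mat m m" and C: "C \<in> carrier_mat m m"
    and e: "\<And>a b. a<m \<Longrightarrow> b<m \<Longrightarrow> C$$(a,b) = (\<Sum>j<k. c j * A j $$(a,b))"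
    and xy: "x<n" "y<n"
  shows "N C $$ (x,y) = (\<Sum>j<k. c j * N (A j) $$ (x,y))"
proof -
  have "N C $$ (x,y) = (\<Sum>i<r. \<Sum>a<m. \<Sum>b<m. \<Sum>j<k. c j * (\<kappa> i $$ (x,a) * A j $$(a,b) * cnj (\<kappa> i $$ (y,b))))"
    using xy by (auto simp: out_entry[OF C] e sum_distrib_left sum_distrib_right mult_ac intro!: sum.cong)
  also have "\<dots> = (\<Sum>j<k. \<Sum>i<r. \<Sum>a<m. \<Sum>b<m. c j * (\<kappa> i $$ (x,a) * A j $$(a,b) * cnj (\<kappa> i $$ (y,b))))"
    by (simp only: sum.swap[where A="{..<m}" and B="{..<k}"] sum.swap[where A="{..<r}" and B="{..<k}"])
  also have "\<dots> = (\<Sum>j<k. c j * N (A j) $$ (x,y))"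
    using xy A by (auto simp: out_entry sum_distrib_left intro!: sum.cong)
  finally show ?thesis .
qed

end

lemma channel_obtain_kraus:
  assumes "channel m n N"
  obtains r \<kappa> where "kraus_channel m n r N \<kappa>"
proof -
  from assms obtain Ks where Ks: "\<forall>K\<in>set Ks. K \<in> carrier_mat n m"
    "foldr (\<lambda>K acc. adj K * K + acc) Ks (0\<^sub>m m m) = 1\<^sub>m m"
    "\<forall>\<rho>\<in>carrier_mat m m. N \<rho> = kraus_map n Ks \<rho>"
    unfolding channel_def by blast
  have "kraus_channel m n (length Ks) N (\<lambda>i. Ks!i)"
  proof
    show "\<And>\<rho>. \<rho> \<in> carrier_mat m m \<Longrightarrow> N \<rho> \<in> carrier_mat n n"
      using Ks(1,3) kraus_map_carrier_entry by auto
    show "N \<rho> $$ (x,y) = (\<Sum>i<length Ks. \<Sum>a<m. \<Sum>b<m. (Ks!i) $$ (x,a) * \<rho>$$(a,b) * cnj ((Ks!i) $$ (y,b)))"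
      if "\<rho> \<in> carrier_mat m m" "x<n" "y<n" for \<rho> x y
      using that Ks(1,3) kraus_map_carrier_entry[of Ks n m \<rho>]
      by (simp add: sum_list_sum_nth atLeast0LessThan)
    show "(\<Sum>i<length Ks. \<Sum>x<n. cnj ((Ks!i) $$ (x,a)) * (Ks!i) $$ (x,b)) = (if a = b then 1 else 0)"
      if "a<m" "b<m" for a b
      using that kraus_completeness_carrier_entry[OF Ks(1)] Ks(2)
      by (simp add: sum_list_sum_nth atLeast0LessThan)
  qed
  then show ?thesis by (rule that)
qed

lemma channel_density: "channel m n N \<Longrightarrow> density m \<rho> \<Longrightarrow> density n (N \<rho>)"
  by (metis channel_obtain_kraus kraus_channel.density_preserving)

lemma channel_entry_lincomb2:
  assumes "channel m n N" "A \<in> carrier_mat m m" "B \<in> carrier_mat m m" "C \<in> carrier_mat m m"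
    and "\<And>a b. a<m \<Longrightarrow> b<m \<Longrightarrow> C$$(a,b) = \<alpha> * A$$(a,b) + \<beta> * B$$(a,b)"
    and "x<n" "y<n"
  shows "N C $$ (x,y) = \<alpha> * N A $$ (x,y) + \<beta> * N B $$ (x,y)"
  using assms(1) by (rule channel_obtain_kraus) (use assms(2-) kraus_channel.entry_lincomb2 in blast)

lemma channel_entry_lincomb:
  assumes "channel m n N" "\<And>j. j<k \<Longrightarrow> A j \<in> carrier_mat m m" "C \<in> carrier_mat m m"
    and "\<And>a b. a<m \<Longrightarrow> b<m \<Longrightarrow> C$$(a,b) = (\<Sum>j<k. c j * A j $$(a,b))"
    and "x<n" "y<n"
  shows "N C $$ (x,y) = (\<Sum>j<k. c j * N (A j) $$ (x,y))"
  using assms(1) by (rule channel_obtain_kraus) (use assms(2-) kraus_channel.entry_lincomb in blast)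

subsection \<open>Robustness of coherence\<close>

lemma robustness_le:
  assumes "0 \<le> s" "density n \<tau>"
    and "incoherent n ((1 / (1 + complex_of_real s)) \<cdot>\<^sub>m (\<sigma> + complex_of_real s \<cdot>\<^sub>m \<tau>))"
  shows "robustness n \<sigma> \<le> s"
  unfolding robustness_def by (rule cInf_lower) (use assms in \<open>auto simp: bdd_below_def\<close>)

lemma robustness_greatest:
  assumes "0 \<le> s\<^sub>0" "density n \<tau>\<^sub>0"
    and "incoherent n ((1 / (1 + complex_of_real s\<^sub>0)) \<cdot>\<^sub>m (\<sigma> + complex_of_real s\<^sub>0 \<cdot>\<^sub>m \<tau>\<^sub>0))"
    and "\<And>s \<tau>. 0 \<le> s \<Longrightarrow> density n \<tau> \<Longrightarrow>
        incoherent n ((1 / (1 + complex_of_real s)) \<cdot>\<^sub>m (\<sigma> + complex_of_real s \<cdot>\<^sub>m \<tau>)) \<Longrightarrow> z \<le> s"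
  shows "z \<le> robustness n \<sigma>"
  unfolding robustness_def by (rule cInf_greatest) (use assms in auto)

lemma incoherent_maximally_mixed:
  assumes "0 < n"
  shows "incoherent n (complex_of_real (1 / real n) \<cdot>\<^sub>m 1\<^sub>m n)"
proof -
  have "psd n (complex_of_real (1 / real n) \<cdot>\<^sub>m 1\<^sub>m n)"
    by (rule psd_diagonal) (auto simp: less_eq_complex_def)
  moreover have "tr (complex_of_real (1 / real n) \<cdot>\<^sub>m 1\<^sub>m n) = 1"
    using assms by (simp add: tr_def)
  ultimately show ?thesis by (simp add: incoherent_def density_def)
qed

lemma robustness_incoherent:
  assumes "incoherent n \<sigma>"
  shows "robustness n \<sigma> = 0"
proof -
  have \<sigma>: "density n \<sigma>" "\<sigma> \<in> carrier_mat n n"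
    using assms by (auto simp: incoherent_def density_def psd_def)
  have mix: "(1 / (1 + complex_of_real 0)) \<cdot>\<^sub>m (\<sigma> + complex_of_real 0 \<cdot>\<^sub>m \<sigma>) = \<sigma>"
    using \<sigma>(2) by (intro eq_matI) auto
  have "robustness n \<sigma> \<le> 0"
    by (rule robustness_le[of 0 n \<sigma>]) (use \<sigma> assms mix in auto)
  moreover have "0 \<le> robustness n \<sigma>"
    by (rule robustness_greatest[of 0 n \<sigma>]) (use \<sigma> assms mix in auto)
  ultimately show ?thesis by simp
qed

text \<open>Witness: \<tau> = T / tr T with weight s = c tr T.\<close>
lemma robustness_le_diagonalising_psd:
  assumes \<sigma>: "density n \<sigma>" and T: "psd n T" and c: "0 \<le> c"
    and off: "\<And>a b. a<n \<Longrightarrow> b<n \<Longrightarrow> a \<noteq> b \<Longrightarrow> \<sigma>$$(a,b) + complex_of_real c * T$$(a,b) = 0"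
  shows "robustness n \<sigma> \<le> c * Re (tr T)"
proof -
  define t where "t = Re (tr T)"
  have \<sigma>c: "\<sigma> \<in> carrier_mat n n" and tr\<sigma>: "tr \<sigma> = 1" and Tc: "T \<in> carrier_mat n n"
    using \<sigma> T by (auto simp: density_def psd_def)
  have trT: "tr T = complex_of_real t" and t: "0 \<le> t"
    using nonneg_complex_eq_of_real_Re[OF psd_tr_nonneg[OF T]] psd_tr_nonneg[OF T]
    by (auto simp: t_def less_eq_complex_def)
  show ?thesis
  proof (cases "t = 0")
    case True
    then have "T = 0\<^sub>m n n" using psd_tr_zero_imp_zero[OF T] trT by simp
    then have "incoherent n \<sigma>" using \<sigma> off by (simp add: incoherent_def)
    then show ?thesis using robustness_incoherent by (simp add: t_def[symmetric] True)
  next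
    case False
    with t have t_pos: "0 < t" by simp
    define \<tau> where "\<tau> = complex_of_real (1 / t) \<cdot>\<^sub>m T"
    define M where "M = \<sigma> + complex_of_real c \<cdot>\<^sub>m T"
    have mix: "(1 / (1 + complex_of_real (c * t))) \<cdot>\<^sub>m (\<sigma> + complex_of_real (c * t) \<cdot>\<^sub>m \<tau>)
        = complex_of_real (1 / (1 + c * t)) \<cdot>\<^sub>m M"
      using t_pos \<sigma>c Tc by (intro eq_matI) (auto simp: \<tau>_def M_def)
    have "density n \<tau>"
      using psd_smult[OF T, of "1 / t"] t_pos trT Tc by (simp add: density_def \<tau>_def tr_smult)
    moreover have "incoherent n (complex_of_real (1 / (1 + c * t)) \<cdot>\<^sub>m M)"
    proof -
      have "psd n M" unfolding M_def using \<sigma> T c by (intro psd_add psd_smult) (auto simp: density_def)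
      then have "psd n (complex_of_real (1 / (1 + c * t)) \<cdot>\<^sub>m M)"
        using c t by (intro psd_smult) auto
      moreover have "tr (complex_of_real (1 / (1 + c * t)) \<cdot>\<^sub>m M) = 1"
      proof -
        have nz: "1 + c * t \<noteq> 0" using mult_nonneg_nonneg[OF c t] by linarith
        have Mc: "M \<in> carrier_mat n n" using \<sigma>c Tc by (simp add: M_def)
        have trM: "tr M = complex_of_real (1 + c * t)"
          using \<sigma>c Tc by (simp add: M_def tr_add tr_smult[OF Tc] tr\<sigma> trT)
        show ?thesis unfolding tr_smult[OF Mc] trM of_real_mult[symmetric] using nz by simp
      qed
      moreover have "M $$ (a,b) = 0" if "a<n" "b<n" "a \<noteq> b" for a b
        using that off \<sigma>c Tc by (simp add: M_def)
      ultimately show ?thesis using \<sigma>c Tc by (simp add: incoherent_def density_def M_def)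
    qed
    ultimately show ?thesis
      using robustness_le[of "c * t" n \<tau> \<sigma>] mix c t by (simp add: t_def)
  qed
qed

subsection \<open>Diagonal blocks of the output space\<close>

definition diag_block :: "nat \<Rightarrow> nat \<Rightarrow> complex mat \<Rightarrow> complex mat" where
  "diag_block d j X = mat d d (\<lambda>(a,b). X $$ (j*d + a, j*d + b))"

lemma block_index_less: "i < k \<Longrightarrow> a < d \<Longrightarrow> i*d + a < k*(d::nat)"
proof -
  assume "i < k" "a < d"
  then have "i*d + a < (i+1)*d" by simp
  also have "\<dots> \<le> k*d" using \<open>i < k\<close> by (intro mult_le_mono1) simp
  finally show ?thesis .
qed

lemma block_index_neq:
  assumes "a < d" "b < d" "i \<noteq> j"
  shows "i*d + a \<noteq> j*(d::nat) + b"
proof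
  assume "i*d + a = j*d + b"
  then have "(i*d + a) div d = (j*d + b) div d" by simp
  with assms show False by simp
qed

lemma sum_lessThan_mult_blocks: "(\<Sum>x<k*d. f x) = (\<Sum>i<k. \<Sum>a<(d::nat). f (i*d + a))"
proof (induction k)
  case 0 then show ?case by simp
next
  case (Suc k)
  have "(\<Sum>x<Suc k*d. f x) = (\<Sum>x\<in>{0..<k*d}. f x) + (\<Sum>x\<in>{k*d..<k*d+d}. f x)"
    using sum.atLeastLessThan_concat[of 0 "k*d" "k*d+d" f]
    by (simp add: atLeast0LessThan[symmetric] add.commute)
  also have "(\<Sum>x\<in>{k*d..<k*d+d}. f x) = (\<Sum>a<d. f (k*d + a))"
    using sum.shift_bounds_nat_ivl[of f "0" "k*d" d] by (simp add: atLeast0LessThan add.commute)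
  finally show ?case using Suc by (simp add: atLeast0LessThan)
qed

lemma tr_eq_sum_tr_diag_block:
  "X \<in> carrier_mat (k*d) (k*d) \<Longrightarrow> tr X = (\<Sum>j<k. tr (diag_block d j X))"
  by (simp add: tr_def diag_block_def sum_lessThan_mult_blocks)

lemma tr_proj_B_eq_tr_diag_block: "tr_proj_B d j X = tr (diag_block d j X)"
  by (simp add: tr_proj_B_def tr_def diag_block_def)

lemma psd_diag_block: "psd (k*d) X \<Longrightarrow> j < k \<Longrightarrow> psd d (diag_block d j X)"
  by (rule psd_submatrix[where f = "\<lambda>a. j*d + a"])
     (auto simp: diag_block_def inj_on_def block_index_less)

lemma density_tr_diag_block_le_one:
  assumes X: "density (k*d) X" and j: "j < k"
  shows "Re (tr (diag_block d j X)) \<le> 1"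
proof -
  have Xp: "psd (k*d) X" and Xc: "X \<in> carrier_mat (k*d) (k*d)" and "tr X = 1"
    using X by (auto simp: density_def psd_def)
  then have "(\<Sum>i<k. Re (tr (diag_block d i X))) = 1"
    by (simp add: tr_eq_sum_tr_diag_block flip: Re_sum)
  moreover have "Re (tr (diag_block d j X)) \<le> (\<Sum>i<k. Re (tr (diag_block d i X)))"
    using j psd_tr_nonneg[OF psd_diag_block[OF Xp]]
    by (intro member_le_sum) (auto simp: less_eq_complex_def)
  ultimately show ?thesis by simp
qed

lemma density_concentrated_diag_block:
  assumes X: "density (k*d) X" and j: "j < k" and t: "tr (diag_block d j X) = 1"
  shows "\<And>i. i < k \<Longrightarrow> i \<noteq> j \<Longrightarrow> diag_block d i X = 0\<^sub>m d d"
    and "ptrace_B k d X = diag_block d j X"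
    and "density d (diag_block d j X)"
proof -
  have Xp: "psd (k*d) X" and Xc: "X \<in> carrier_mat (k*d) (k*d)" and trX: "tr X = 1"
    using X by (auto simp: density_def psd_def)
  have nonneg: "0 \<le> tr (diag_block d i X)" if "i < k" for i
    using psd_tr_nonneg[OF psd_diag_block[OF Xp that]] .
  have "1 = tr (diag_block d j X) + (\<Sum>i\<in>{..<k}-{j}. tr (diag_block d i X))"
    using trX j by (simp add: tr_eq_sum_tr_diag_block[OF Xc] sum.remove)
  then have "(\<Sum>i\<in>{..<k}-{j}. tr (diag_block d i X)) = 0" using t by simp
  then have zero_tr: "tr (diag_block d i X) = 0" if "i < k" "i \<noteq> j" for i
    using that nonneg sum_nonneg_eq_0_iff[of "{..<k}-{j}" "\<lambda>i. tr (diag_block d i X)"] by auto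
  show zero: "diag_block d i X = 0\<^sub>m d d" if "i < k" "i \<noteq> j" for i
    using psd_tr_zero_imp_zero[OF psd_diag_block[OF Xp that(1)] zero_tr[OF that]] .
  have "X $$ (i*d + a, i*d + b) = 0" if "i < k" "i \<noteq> j" "a < d" "b < d" for i a b
    using arg_cong[OF zero[OF that(1,2)], of "\<lambda>M. M $$ (a,b)"] that by (simp add: diag_block_def)
  then have "(\<Sum>i<k. X $$ (i*d + a, i*d + b)) = X $$ (j*d + a, j*d + b)" if "a < d" "b < d" for a b
    using that j by (subst sum.remove[of _ j]) (auto intro!: sum.neutral)
  then show "ptrace_B k d X = diag_block d j X"
    by (intro eq_matI) (auto simp: ptrace_B_def diag_block_def)
  show "density d (diag_block d j X)"
    using psd_diag_block[OF Xp j] t by (simp add: density_def)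
qed

lemma incoherent_ptrace_B:
  assumes X: "density (k*d) X"
    and off: "\<And>x y. x < k*d \<Longrightarrow> y < k*d \<Longrightarrow> x \<noteq> y \<Longrightarrow> X$$(x,y) = 0"
  shows "incoherent d (ptrace_B k d X)"
proof -
  have Xp: "psd (k*d) X" and Xc: "X \<in> carrier_mat (k*d) (k*d)" and trX: "tr X = 1"
    using X by (auto simp: density_def psd_def)
  let ?P = "ptrace_B k d X"
  have off': "?P $$ (a,b) = 0" if "a<d" "b<d" "a \<noteq> b" for a b
    using that off block_index_less by (simp add: ptrace_B_def)
  have "psd d ?P"
    using psd_diag_nonneg[OF Xp] block_index_less
    by (intro psd_diagonal off') (auto simp: ptrace_B_def intro!: sum_nonneg)
  moreover have "tr ?P = tr X"
  proof -
    have "tr ?P = (\<Sum>a<d. \<Sum>i<k. X $$ (i*d + a, i*d + a))" by (simp add: tr_def ptrace_B_def)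
    also have "\<dots> = (\<Sum>i<k. \<Sum>a<d. X $$ (i*d + a, i*d + a))" by (rule sum.swap)
    finally show ?thesis using Xc by (simp add: tr_def sum_lessThan_mult_blocks)
  qed
  ultimately show ?thesis using off' trX by (simp add: incoherent_def density_def)
qed

subsection \<open>Spectra\<close>

lemma smult_mat_mult_mat_vec:
  "A \<in> carrier_mat n n \<Longrightarrow> v \<in> carrier_vec n \<Longrightarrow> (c \<cdot>\<^sub>m A) *\<^sub>v v = c \<cdot>\<^sub>v (A *\<^sub>v v)"
  by (intro eq_vecI) (auto simp: scalar_prod_def sum_distrib_left mult.assoc)

lemma eigvals_scaled_idempotent:
  fixes A :: "complex mat"
  assumes A: "A \<in> carrier_mat n n" and sq: "A * A = c \<cdot>\<^sub>m A"
    and ch: "char_poly A = (\<Prod>a\<leftarrow>es. [:- a, 1:])" and e: "e \<in> set es"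
  shows "e = 0 \<or> e = c"
proof -
  have "poly (char_poly A) e = 0" unfolding ch by (rule linear_poly_root[OF e])
  then have "eigenvalue A e" using eigenvalue_root_char_poly[OF A] by simp
  then obtain v where v: "v \<in> carrier_vec n" "v \<noteq> 0\<^sub>v n" "A *\<^sub>v v = e \<cdot>\<^sub>v v"
    unfolding eigenvalue_def eigenvector_def using A by auto
  have "e \<cdot>\<^sub>v (e \<cdot>\<^sub>v v) = A *\<^sub>v (A *\<^sub>v v)"
    using v mult_mat_vec[OF A v(1)] by simp
  also have "\<dots> = (A * A) *\<^sub>v v" using assoc_mult_mat_vec[OF A A v(1)] by simp
  also have "\<dots> = c \<cdot>\<^sub>v (e \<cdot>\<^sub>v v)" unfolding sq smult_mat_mult_mat_vec[OF A v(1)] v(3) ..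
  finally have eq: "e \<cdot>\<^sub>v (e \<cdot>\<^sub>v v) = c \<cdot>\<^sub>v (e \<cdot>\<^sub>v v)" .
  obtain i where i: "i < n" "v $ i \<noteq> 0"
  proof (rule ccontr)
    assume "\<not> thesis"
    then have "v = 0\<^sub>v n" using that v(1) by (intro eq_vecI) auto
    with v(2) show False by simp
  qed
  have "e * (e * v $ i) = c * (e * v $ i)"
    using arg_cong[OF eq, of "\<lambda>w. w $ i"] i v(1) by simp
  then have "(e - c) * e * v $ i = 0" by (simp add: algebra_simps)
  then show ?thesis using i by auto
qed

lemma sum_list_eigvals_eq_tr:
  fixes A :: "complex mat"
  assumes A: "A \<in> carrier_mat n n" and ch: "char_poly A = (\<Prod>a\<leftarrow>es. [:- a, 1:])"
  shows "sum_list es = tr A"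
proof -
  obtain B P Q where sd: "schur_decomposition A es = (B,P,Q)" by (cases "schur_decomposition A es") auto
  from schur_decomposition[OF A ch sd]
  have sim: "similar_mat_wit A B P Q" and dg: "diag_mat B = es" by auto
  from sim A have Bc: "B \<in> carrier_mat n n" and Pc: "P \<in> carrier_mat n n" and Qc: "Q \<in> carrier_mat n n"
    and QP: "Q * P = 1\<^sub>m n" and eq: "A = P * B * Q"
    unfolding similar_mat_wit_def Let_def by auto
  have "tr A = tr (Q * (P * B))" using eq Pc Bc Qc tr_mult_comm[of "P * B" n n Q] by simp
  also have "Q * (P * B) = B" using Pc Bc Qc QP by (simp flip: assoc_mult_mat)
  also have "tr B = sum_list (diag_mat B)"
    using Bc by (simp add: tr_def diag_mat_def sum_list_sum_nth atLeast0LessThan)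
  finally show ?thesis using dg by simp
qed

lemma sum_list_two_valued:
  fixes g :: "complex \<Rightarrow> real"
  assumes "\<forall>e\<in>set es. e = 0 \<or> e = c" "g 0 = 0"
  shows "sum_list es = of_nat (length (filter (\<lambda>e. e = c) es)) * c"
    and "sum_list (map g es) = real (length (filter (\<lambda>e. e = c) es)) * g c"
  using assms by (induction es) (auto simp: algebra_simps)

subsection \<open>The uniform orthonormal ensemble\<close>

locale orthonormal_ensemble =
  fixes k d :: nat and \<psi> :: "nat \<Rightarrow> complex vec"
  assumes k_pos: "0 < k" and k_less_d: "k < d"
    and \<psi>_carrier: "\<And>i. i < k \<Longrightarrow> \<psi> i \<in> carrier_vec d"
    and \<psi>_normalized: "\<And>i. i < k \<Longrightarrow> map_vec cnj (\<psi> i) \<bullet> \<psi> i = 1"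
    and \<psi>_orthogonal: "\<And>i j. i < k \<Longrightarrow> j < k \<Longrightarrow> i \<noteq> j \<Longrightarrow> map_vec cnj (\<psi> i) \<bullet> \<psi> j = 0"
begin

abbreviation \<omega> :: "complex mat" where
  "\<omega> \<equiv> avg_state k d (\<lambda>_. 1 / real k) (\<lambda>i. proj (\<psi> i))"

definition span_proj :: "nat \<Rightarrow> nat \<Rightarrow> complex" where
  "span_proj a b = (\<Sum>j<k. \<psi> j $ a * cnj (\<psi> j $ b))"

definition perp_proj :: "nat \<Rightarrow> nat \<Rightarrow> complex" where
  "perp_proj a b = (if a = b then 1 else 0) - span_proj a b"

definition perp_proj_mat :: "complex mat" where
  "perp_proj_mat = mat d d (\<lambda>(a,b). perp_proj a b)"

lemma d_pos: "0 < d"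
  using k_pos k_less_d by simp

lemma inner_\<psi>:
  "i < k \<Longrightarrow> j < k \<Longrightarrow> (\<Sum>a<d. cnj (\<psi> i $ a) * \<psi> j $ a) = (if i = j then 1 else 0)"
  using \<psi>_normalized[of i] \<psi>_orthogonal[of i j] \<psi>_carrier[of i] \<psi>_carrier[of j]
  by (auto simp: scalar_prod_def atLeast0LessThan)

lemma proj_\<psi>_carrier: "i < k \<Longrightarrow> proj (\<psi> i) \<in> carrier_mat d d"
  using carrier_vecD[OF \<psi>_carrier] by (simp add: proj_def)

lemma proj_\<psi>_entry: "i < k \<Longrightarrow> a < d \<Longrightarrow> b < d \<Longrightarrow> proj (\<psi> i) $$ (a,b) = \<psi> i $ a * cnj (\<psi> i $ b)"
  using carrier_vecD[OF \<psi>_carrier] by (simp add: proj_def)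

lemma avg_carrier: "\<omega> \<in> carrier_mat d d"
  by (simp add: avg_state_def)

lemma avg_entry: "a < d \<Longrightarrow> b < d \<Longrightarrow> \<omega> $$ (a,b) = complex_of_real (1 / real k) * span_proj a b"
  by (simp add: avg_state_def span_proj_def proj_\<psi>_entry sum_distrib_left)

lemma cnj_span_proj: "cnj (span_proj a b) = span_proj b a"
  by (simp add: span_proj_def cnj_sum mult.commute)

lemma cnj_perp_proj: "cnj (perp_proj a b) = perp_proj b a"
  by (simp add: perp_proj_def cnj_span_proj)

lemma span_proj_idem: "(\<Sum>c<d. span_proj a c * span_proj c b) = span_proj a b"
proof -
  have "(\<Sum>c<d. span_proj a c * span_proj c b)
      = (\<Sum>i<k. \<Sum>j<k. \<psi> i $ a * (\<Sum>c<d. cnj (\<psi> i $ c) * \<psi> j $ c) * cnj (\<psi> j $ b))"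
    by (simp add: span_proj_def sum_product sum_distrib_left sum_distrib_right mult_ac
        sum.swap[where A="{..<d}" and B="{..<k}"])
  also have "\<dots> = (\<Sum>i<k. \<Sum>j<k. if j = i then \<psi> i $ a * cnj (\<psi> j $ b) else 0)"
    by (intro sum.cong refl) (auto simp: inner_\<psi>)
  also have "\<dots> = span_proj a b" by (simp add: span_proj_def)
  finally show ?thesis .
qed

lemma perp_proj_gram:
  assumes "a < d" "b < d"
  shows "(\<Sum>c<d. cnj (perp_proj c a) * perp_proj c b) = perp_proj a b"
proof -
  have "(\<Sum>c<d. cnj (perp_proj c a) * perp_proj c b) = (\<Sum>c<d. perp_proj a c * perp_proj c b)"
    by (simp add: cnj_perp_proj)
  also have "\<dots> = (\<Sum>c<d. (if c = a then (if a = b then 1 else 0) else 0)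
      - (if a = c then span_proj c b else 0) - (if c = b then span_proj a c else 0)
      + span_proj a c * span_proj c b)"
    by (intro sum.cong refl) (auto simp: perp_proj_def algebra_simps)
  also have "\<dots> = (if a = b then 1 else 0) - span_proj a b"
    using assms by (simp add: sum.distrib sum_subtractf span_proj_idem)
  finally show ?thesis by (simp add: perp_proj_def)
qed

lemma perp_proj_\<psi>:
  assumes j: "j < k" and c: "c < d"
  shows "(\<Sum>a<d. perp_proj c a * \<psi> j $ a) = 0"
proof -
  have "(\<Sum>a<d. span_proj c a * \<psi> j $ a) = (\<Sum>i<k. \<psi> i $ c * (\<Sum>a<d. cnj (\<psi> i $ a) * \<psi> j $ a))"
    by (simp add: span_proj_def sum_distrib_left sum_distrib_right mult_ac
        sum.swap[where A="{..<d}" and B="{..<k}"])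
  also have "\<dots> = (\<Sum>i<k. if i = j then \<psi> j $ c else 0)"
    using j by (intro sum.cong refl) (auto simp: inner_\<psi>)
  finally have "(\<Sum>a<d. span_proj c a * \<psi> j $ a) = \<psi> j $ c" using j by simp
  moreover have "(\<Sum>a<d. perp_proj c a * \<psi> j $ a)
      = (\<Sum>a<d. (if c = a then \<psi> j $ a else 0) - span_proj c a * \<psi> j $ a)"
    by (intro sum.cong) (auto simp: perp_proj_def algebra_simps)
  ultimately show ?thesis using c by (simp add: sum_subtractf)
qed

lemma tr_span_proj: "(\<Sum>a<d. span_proj a a) = of_nat k"
proof -
  have "(\<Sum>a<d. span_proj a a) = (\<Sum>j<k. \<Sum>a<d. cnj (\<psi> j $ a) * \<psi> j $ a)"
    unfolding span_proj_def by (subst sum.swap) (simp add: mult.commute)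
  also have "\<dots> = of_nat k" by (simp add: inner_\<psi>)
  finally show ?thesis .
qed

lemma perp_proj_mat_carrier: "perp_proj_mat \<in> carrier_mat d d"
  by (simp add: perp_proj_mat_def)

lemma psd_perp_proj_mat: "psd d perp_proj_mat"
  by (rule psd_gram[where Y = perp_proj and C = "{..<d}"]) (auto simp: perp_proj_mat_def perp_proj_gram)

lemma density_proj_\<psi>:
  assumes j: "j < k"
  shows "density d (proj (\<psi> j))"
proof -
  have "psd d (proj (\<psi> j))"
    by (rule psd_gram[where Y = "\<lambda>(_::unit) a. cnj (\<psi> j $ a)" and C = UNIV])
       (use j proj_\<psi>_carrier in \<open>auto simp: proj_\<psi>_entry\<close>)
  moreover have "tr (proj (\<psi> j)) = 1"
    using inner_\<psi>[OF j j] \<psi>_carrier[OF j] by (simp add: tr_def proj_def mult.commute)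
  ultimately show ?thesis by (simp add: density_def)
qed

lemma tr_avg: "tr \<omega> = 1"
proof -
  have "tr \<omega> = complex_of_real (1 / real k) * (\<Sum>a<d. span_proj a a)"
    using avg_carrier by (simp add: tr_def avg_entry sum_distrib_left)
  then show ?thesis using k_pos by (simp add: tr_span_proj)
qed

definition success_prob :: "(nat \<Rightarrow> complex mat) \<Rightarrow> real" where
  "success_prob M = (\<Sum>j<k. 1 / real k * Re (tr (M j * proj (\<psi> j))))"

lemma tr_mult_proj_\<psi>:
  assumes "M \<in> carrier_mat d d" "j < k"
  shows "tr (M * proj (\<psi> j)) = quad_form d M (\<psi> j)"
  using assms \<psi>_carrier[OF assms(2)]
  by (auto simp: tr_def quad_form_def proj_def scalar_prod_def atLeast0LessThan sum_distrib_left mult_ac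
      intro!: sum.cong)

lemma quad_form_proj_\<psi>:
  assumes j: "j < k"
  shows "quad_form d (proj (\<psi> j)) (\<psi> j) = 1"
proof -
  have "quad_form d (proj (\<psi> j)) (\<psi> j)
      = (\<Sum>a<d. \<Sum>b<d. (cnj (\<psi> j $ a) * \<psi> j $ a) * (cnj (\<psi> j $ b) * \<psi> j $ b))"
    by (auto simp: quad_form_def proj_\<psi>_entry[OF j] mult_ac intro!: sum.cong)
  also have "\<dots> = 1" using inner_\<psi>[OF j j] by (simp add: sum_product[symmetric])
  finally show ?thesis .
qed

lemma quad_form_perp_proj_\<psi>:
  assumes j: "j < k"
  shows "quad_form d perp_proj_mat (\<psi> j) = 0"
proof -
  have "(\<Sum>b<d. perp_proj_mat $$ (a,b) * \<psi> j $ b) = 0" if "a < d" for a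
    using perp_proj_\<psi>[OF j that] that by (simp add: perp_proj_mat_def)
  then show ?thesis unfolding quad_form_eq_sum_inner by simp
qed

lemma quad_form_one_\<psi>:
  assumes j: "j < k"
  shows "quad_form d (1\<^sub>m d) (\<psi> j) = 1"
proof -
  have "(\<Sum>b<d. 1\<^sub>m d $$ (a,b) * \<psi> j $ b) = \<psi> j $ a" if "a < d" for a
  proof -
    have "(\<Sum>b<d. 1\<^sub>m d $$ (a,b) * \<psi> j $ b) = (\<Sum>b<d. if b = a then \<psi> j $ a else 0)"
      using that by (intro sum.cong) auto
    then show ?thesis using that by simp
  qed
  then have "quad_form d (1\<^sub>m d) (\<psi> j) = (\<Sum>a<d. cnj (\<psi> j $ a) * \<psi> j $ a)"
    unfolding quad_form_eq_sum_inner by simp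
  then show ?thesis using inner_\<psi>[OF j j] by simp
qed

text \<open>For a POVM, the j-th term is at most \<langle>\<psi>_j| \<Sum>_i M i |\<psi>_j\<rangle> = 1.\<close>
lemma success_prob_le_one:
  assumes "POVM k d M"
  shows "success_prob M \<le> 1"
proof -
  have M: "\<And>j. j < k \<Longrightarrow> psd d (M j)" and sum_M: "mat d d (\<lambda>(a,b). \<Sum>j<k. M j $$ (a,b)) = 1\<^sub>m d"
    using assms by (auto simp: POVM_def)
  have "Re (tr (M j * proj (\<psi> j))) \<le> 1" if j: "j < k" for j
  proof -
    have nonneg: "0 \<le> Re (quad_form d (M i) (\<psi> j))" if "i < k" for i
      using M[OF that] \<psi>_carrier[OF j] unfolding psd_iff_quad_form by (auto simp: less_eq_complex_def)
    have "Re (tr (M j * proj (\<psi> j))) = Re (quad_form d (M j) (\<psi> j))"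
      using M[OF j] j by (simp add: tr_mult_proj_\<psi> psd_def)
    also have "\<dots> \<le> (\<Sum>i<k. Re (quad_form d (M i) (\<psi> j)))"
      using j nonneg by (intro member_le_sum) auto
    also have "\<dots> = Re (quad_form d (1\<^sub>m d) (\<psi> j))"
      by (subst quad_form_sum[where X = "1\<^sub>m d" and M = M and m = k]) (simp_all flip: sum_M)
    also have "\<dots> = 1" using quad_form_one_\<psi>[OF j] by simp
    finally show ?thesis .
  qed
  then have "success_prob M \<le> (\<Sum>j<k. 1 / real k * 1)"
    unfolding success_prob_def by (intro sum_mono mult_left_mono) auto
  also have "\<dots> = 1" using k_pos by simp
  finally show ?thesis .
qed

definition discriminating_POVM :: "nat \<Rightarrow> complex mat" where
  "discriminating_POVM j = (if j = 0 then proj (\<psi> j) + perp_proj_mat else proj (\<psi> j))"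

lemma POVM_discriminating_POVM: "POVM k d discriminating_POVM"
  unfolding POVM_def
proof (intro conjI allI impI)
  fix j assume "j < k"
  then show "psd d (discriminating_POVM j)"
    using density_proj_\<psi> psd_perp_proj_mat
    by (auto simp: discriminating_POVM_def density_def intro: psd_add)
next
  have "(\<Sum>j<k. discriminating_POVM j $$ (a,b)) = (if a = b then 1 else 0)" if "a < d" "b < d" for a b
  proof -
    have "(\<Sum>j<k. discriminating_POVM j $$ (a,b))
        = (\<Sum>j<k. proj (\<psi> j) $$ (a,b) + (if j = 0 then perp_proj a b else 0))"
      using that proj_\<psi>_carrier
      by (intro sum.cong) (auto simp: discriminating_POVM_def perp_proj_mat_def)
    also have "\<dots> = (\<Sum>j<k. proj (\<psi> j) $$ (a,b)) + perp_proj a b"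
      using k_pos by (simp add: sum.distrib)
    finally have "(\<Sum>j<k. discriminating_POVM j $$ (a,b)) = (\<Sum>j<k. proj (\<psi> j) $$ (a,b)) + perp_proj a b" .
    then show ?thesis using that by (simp add: perp_proj_def span_proj_def proj_\<psi>_entry)
  qed
  then show "mat d d (\<lambda>(a,b). \<Sum>j<k. discriminating_POVM j $$ (a,b)) = 1\<^sub>m d"
    by (intro eq_matI) auto
qed

lemma success_prob_discriminating_POVM: "success_prob discriminating_POVM = 1"
proof -
  have "tr (discriminating_POVM j * proj (\<psi> j)) = 1" if j: "j < k" for j
  proof -
    have "discriminating_POVM j \<in> carrier_mat d d"
      using j proj_\<psi>_carrier by (simp add: discriminating_POVM_def perp_proj_mat_carrier)
    moreover have "quad_form d (discriminating_POVM j) (\<psi> j) = 1"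
      using j proj_\<psi>_carrier[OF j]
      by (cases "j = 0") (simp_all add: discriminating_POVM_def quad_form_add perp_proj_mat_carrier
          quad_form_proj_\<psi> quad_form_perp_proj_\<psi>)
    ultimately show ?thesis using j by (simp add: tr_mult_proj_\<psi>)
  qed
  then show ?thesis using k_pos by (simp add: success_prob_def)
qed

lemma P_suc_eq_one: "P_suc k d (\<lambda>_. 1 / real k) (\<lambda>i. proj (\<psi> i)) = 1"
proof -
  have "P_suc k d (\<lambda>_. 1 / real k) (\<lambda>i. proj (\<psi> i)) = Sup {success_prob M | M. POVM k d M}"
    by (simp add: P_suc_def success_prob_def)
  also have "\<dots> = 1"
  proof (rule antisym)
    show "Sup {success_prob M | M. POVM k d M} \<le> 1"
      by (rule cSup_least) (use POVM_discriminating_POVM success_prob_le_one in auto)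
    show "1 \<le> Sup {success_prob M | M. POVM k d M}"
      by (rule cSup_upper)
         (use POVM_discriminating_POVM success_prob_discriminating_POVM success_prob_le_one
           in \<open>auto simp: bdd_above_def\<close>)
  qed
  finally show ?thesis .
qed

lemma avg_mult_avg: "\<omega> * \<omega> = complex_of_real (1 / real k) \<cdot>\<^sub>m \<omega>"
proof (rule eq_matI)
  fix a b assume "a < dim_row (complex_of_real (1 / real k) \<cdot>\<^sub>m \<omega>)" "b < dim_col (complex_of_real (1 / real k) \<cdot>\<^sub>m \<omega>)"
  then have ab: "a < d" "b < d" using avg_carrier by auto
  let ?c = "complex_of_real (1 / real k)"
  have "(\<omega> * \<omega>) $$ (a,b) = (\<Sum>c<d. (?c * span_proj a c) * (?c * span_proj c b))"
    using avg_carrier ab by (simp add: scalar_prod_def atLeast0LessThan avg_entry)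
  also have "\<dots> = ?c * ?c * (\<Sum>c<d. span_proj a c * span_proj c b)"
    by (simp add: sum_distrib_left mult_ac)
  also have "\<dots> = (?c \<cdot>\<^sub>m \<omega>) $$ (a,b)" using ab avg_carrier by (simp add: span_proj_idem avg_entry)
  finally show "(\<omega> * \<omega>) $$ (a,b) = (?c \<cdot>\<^sub>m \<omega>) $$ (a,b)" .
qed (use avg_carrier in auto)

text \<open>\<omega> has k eigenvalues 1/k, the rest being 0.\<close>
lemma vN_entropy_avg: "vN_entropy d \<omega> = log 2 (real k)"
proof -
  let ?c = "complex_of_real (1 / real k)"
  define g where "g a = (if Re a = 0 then 0 else - Re a * log 2 (Re a))" for a :: complex
  define es where "es = eigvals d \<omega>"
  define m where "m = length (filter (\<lambda>e. e = ?c) es)"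
  have ch: "char_poly \<omega> = (\<Prod>a\<leftarrow>es. [:- a, 1:])"
    unfolding es_def eigvals_def using someI_ex[OF char_poly_factorized[OF avg_carrier]] by blast
  have two_valued: "\<forall>e\<in>set es. e = 0 \<or> e = ?c"
    using eigvals_scaled_idempotent[OF avg_carrier avg_mult_avg ch] by blast
  have "of_nat m * ?c = 1"
    using sum_list_two_valued(1)[OF two_valued, of g] sum_list_eigvals_eq_tr[OF avg_carrier ch] tr_avg
    by (simp add: g_def m_def)
  then have "real m * (1 / real k) = 1" by (simp add: complex_eq_iff)
  then have "real m = real k" using k_pos by (simp add: field_simps)
  moreover have "g ?c = 1 / real k * log 2 (real k)"
    using k_pos by (simp add: g_def log_divide_pos)
  ultimately have "sum_list (map g es) = log 2 (real k)"
    using sum_list_two_valued(2)[OF two_valued, of g] k_pos by (simp add: g_def m_def)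
  then show ?thesis by (simp add: vN_entropy_def g_def[abs_def] es_def)
qed

definition perp_state :: "complex mat" where
  "perp_state = complex_of_real (1 / (real d - real k)) \<cdot>\<^sub>m perp_proj_mat"

lemma density_perp_state: "density d perp_state"
proof -
  have "psd d perp_state"
    unfolding perp_state_def using k_less_d by (intro psd_smult psd_perp_proj_mat) simp
  moreover have "tr perp_proj_mat = complex_of_real (real d - real k)"
    by (simp add: tr_def perp_proj_mat_def perp_proj_def sum_subtractf tr_span_proj)
  then have "tr perp_state = 1"
    using k_less_d
    by (simp add: perp_state_def tr_smult[OF perp_proj_mat_carrier] flip: of_real_mult)
  ultimately show ?thesis by (simp add: density_def)
qed

lemma avg_perp_state_mixture:
  "(1 / (1 + complex_of_real (real d / real k - 1))) \<cdot>\<^sub>m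
     (\<omega> + complex_of_real (real d / real k - 1) \<cdot>\<^sub>m perp_state) = complex_of_real (1 / real d) \<cdot>\<^sub>m 1\<^sub>m d"
proof (rule eq_matI)
  let ?s = "real d / real k - 1"
  have c1: "1 / (1 + complex_of_real ?s) * complex_of_real (1 / real k) = complex_of_real (1 / real d)"
  proof -
    have "1 / (1 + complex_of_real ?s) * complex_of_real (1 / real k) = complex_of_real (1 / (1 + ?s) * (1 / real k))"
      by simp
    also have "1 / (1 + ?s) * (1 / real k) = 1 / real d" using k_pos k_less_d by (simp add: field_simps)
    finally show ?thesis .
  qed
  have c2: "1 / (1 + complex_of_real ?s) * (complex_of_real ?s * complex_of_real (1 / (real d - real k)))
      = complex_of_real (1 / real d)"
  proof -
    have "1 / (1 + complex_of_real ?s) * (complex_of_real ?s * complex_of_real (1 / (real d - real k)))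
       = complex_of_real (1 / (1 + ?s) * (?s * (1 / (real d - real k))))"
      by simp
    also have "1 / (1 + ?s) * (?s * (1 / (real d - real k))) = 1 / real d"
      using k_pos k_less_d by (simp add: field_simps)
    finally show ?thesis .
  qed
  fix a b assume "a < dim_row (complex_of_real (1 / real d) \<cdot>\<^sub>m 1\<^sub>m d)" "b < dim_col (complex_of_real (1 / real d) \<cdot>\<^sub>m 1\<^sub>m d)"
  then have ab: "a < d" "b < d" by auto
  have "((1 / (1 + complex_of_real ?s)) \<cdot>\<^sub>m (\<omega> + complex_of_real ?s \<cdot>\<^sub>m perp_state)) $$ (a,b) =
      1 / (1 + complex_of_real ?s) * complex_of_real (1 / real k) * span_proj a b +
      1 / (1 + complex_of_real ?s) * (complex_of_real ?s * complex_of_real (1 / (real d - real k))) * perp_proj a b"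
    using ab avg_carrier by (simp add: avg_entry perp_state_def perp_proj_mat_def algebra_simps)
  also have "\<dots> = complex_of_real (1 / real d) * (span_proj a b + perp_proj a b)"
    unfolding c1 c2 by (simp add: algebra_simps)
  also have "\<dots> = (complex_of_real (1 / real d) \<cdot>\<^sub>m 1\<^sub>m d) $$ (a,b)"
    using ab by (simp add: perp_proj_def)
  finally show "((1 / (1 + complex_of_real ?s)) \<cdot>\<^sub>m (\<omega> + complex_of_real ?s \<cdot>\<^sub>m perp_state)) $$ (a,b) =
      (complex_of_real (1 / real d) \<cdot>\<^sub>m 1\<^sub>m d) $$ (a,b)" .
qed (use avg_carrier in \<open>auto simp: perp_state_def perp_proj_mat_def\<close>)

lemma robustness_avg_witness:
  shows "0 \<le> real d / real k - 1" and "density d perp_state"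
    and "incoherent d ((1 / (1 + complex_of_real (real d / real k - 1))) \<cdot>\<^sub>m
           (\<omega> + complex_of_real (real d / real k - 1) \<cdot>\<^sub>m perp_state))"
proof -
  show "0 \<le> real d / real k - 1" using k_pos k_less_d by (simp add: field_simps)
  show "density d perp_state" by (rule density_perp_state)
  show "incoherent d ((1 / (1 + complex_of_real (real d / real k - 1))) \<cdot>\<^sub>m
           (\<omega> + complex_of_real (real d / real k - 1) \<cdot>\<^sub>m perp_state))"
    unfolding avg_perp_state_mixture by (rule incoherent_maximally_mixed[OF d_pos])
qed

lemma robustness_avg_le: "robustness d \<omega> \<le> real d / real k - 1"
  using robustness_le[OF robustness_avg_witness] .

text \<open>The measure-and-prepare channel
  \<rho> \<mapsto> \<Sum>_j \<langle>\<psi>_j|\<rho>|\<psi>_j\<rangle> |j,0\<rangle>\<langle>j,0| + tr((I - P)\<rho>) |0,0\<rangle>\<langle>0,0|.\<close>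
definition kraus_\<psi> :: "nat \<Rightarrow> complex mat" where
  "kraus_\<psi> j = mat (k*d) d (\<lambda>(x,a). if x = j*d then cnj (\<psi> j $ a) else 0)"

definition kraus_perp :: "nat \<Rightarrow> complex mat" where
  "kraus_perp c = mat (k*d) d (\<lambda>(x,a). if x = 0 then perp_proj c a else 0)"

definition meas_kraus :: "complex mat list" where
  "meas_kraus = map kraus_\<psi> [0..<k] @ map kraus_perp [0..<d]"

definition meas_channel :: "complex mat \<Rightarrow> complex mat" where
  "meas_channel = kraus_map (k*d) meas_kraus"

lemma meas_kraus_carrier: "\<forall>K\<in>set meas_kraus. K \<in> carrier_mat (k*d) d"
  by (auto simp: meas_kraus_def kraus_\<psi>_def kraus_perp_def)

lemma meas_kraus_single_row: "K \<in> set meas_kraus \<Longrightarrow> \<exists>x\<^sub>0. \<forall>x<k*d. \<forall>a<d. x \<noteq> x\<^sub>0 \<longrightarrow> K $$ (x,a) = 0"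
  by (auto simp: meas_kraus_def kraus_\<psi>_def kraus_perp_def)

lemma sum_list_meas_kraus: "(\<Sum>K\<leftarrow>meas_kraus. f K) = (\<Sum>j<k. f (kraus_\<psi> j)) + (\<Sum>c<d. f (kraus_perp c))"
  by (simp add: meas_kraus_def interv_sum_list_conv_sum_set_nat atLeast0LessThan comp_def)

lemma channel_meas_channel: "channel d (k*d) meas_channel"
  unfolding channel_def
proof (intro exI conjI)
  show "meas_kraus \<noteq> []" using k_pos by (simp add: meas_kraus_def)
  show "\<forall>K\<in>set meas_kraus. K \<in> carrier_mat (k*d) d" by (rule meas_kraus_carrier)
  show "\<forall>\<rho>\<in>carrier_mat d d. meas_channel \<rho> = kraus_map (k*d) meas_kraus \<rho>" by (simp add: meas_channel_def)
  note F = kraus_completeness_carrier_entry[OF meas_kraus_carrier]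
  show "foldr (\<lambda>K acc. adj K * K + acc) meas_kraus (0\<^sub>m d d) = 1\<^sub>m d"
  proof (rule eq_matI)
    fix a b assume "a < dim_row (1\<^sub>m d :: complex mat)" "b < dim_col (1\<^sub>m d :: complex mat)"
    then have ab: "a < d" "b < d" by auto
    have e1: "(\<Sum>x<k*d. cnj (kraus_\<psi> j $$ (x,a)) * kraus_\<psi> j $$ (x,b)) = \<psi> j $ a * cnj (\<psi> j $ b)"
      if j: "j < k" for j
    proof -
      have "(\<Sum>x<k*d. cnj (kraus_\<psi> j $$ (x,a)) * kraus_\<psi> j $$ (x,b))
          = (\<Sum>x<k*d. if x = j*d then \<psi> j $ a * cnj (\<psi> j $ b) else 0)"
        using ab by (intro sum.cong) (auto simp: kraus_\<psi>_def)
      also have "\<dots> = \<psi> j $ a * cnj (\<psi> j $ b)" using block_index_less[OF j d_pos] by simp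
      finally show ?thesis .
    qed
    have e2: "(\<Sum>x<k*d. cnj (kraus_perp c $$ (x,a)) * kraus_perp c $$ (x,b)) = cnj (perp_proj c a) * perp_proj c b"
      for c
    proof -
      have "(\<Sum>x<k*d. cnj (kraus_perp c $$ (x,a)) * kraus_perp c $$ (x,b))
          = (\<Sum>x<k*d. if x = 0 then cnj (perp_proj c a) * perp_proj c b else 0)"
        using ab by (intro sum.cong) (auto simp: kraus_perp_def)
      also have "\<dots> = cnj (perp_proj c a) * perp_proj c b" using k_pos d_pos by simp
      finally show ?thesis .
    qed
    have "foldr (\<lambda>K acc. adj K * K + acc) meas_kraus (0\<^sub>m d d) $$ (a,b) = span_proj a b + perp_proj a b"
      using F ab by (simp add: sum_list_meas_kraus e1 e2 span_proj_def perp_proj_gram)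
    also have "\<dots> = 1\<^sub>m d $$ (a,b)" using ab by (simp add: perp_proj_def)
    finally show "foldr (\<lambda>K acc. adj K * K + acc) meas_kraus (0\<^sub>m d d) $$ (a,b) = 1\<^sub>m d $$ (a,b)" .
  qed (use F in auto)
qed

lemma meas_channel_off_diag:
  assumes \<rho>: "\<rho> \<in> carrier_mat d d" and xy: "x < k*d" "y < k*d" "x \<noteq> y"
  shows "meas_channel \<rho> $$ (x,y) = 0"
proof -
  have "meas_channel \<rho> $$ (x,y) = (\<Sum>K\<leftarrow>meas_kraus. \<Sum>a<d. \<Sum>b<d. K$$(x,a) * \<rho>$$(a,b) * cnj (K$$(y,b)))"
    using kraus_map_carrier_entry[OF meas_kraus_carrier \<rho>] xy by (simp add: meas_channel_def)
  also have "\<dots> = (\<Sum>K\<leftarrow>meas_kraus. 0)"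
  proof (intro arg_cong[where f = sum_list] map_cong refl)
    fix K assume K: "K \<in> set meas_kraus"
    obtain x\<^sub>0 where "\<forall>x<k*d. \<forall>a<d. x \<noteq> x\<^sub>0 \<longrightarrow> K $$ (x,a) = 0" using meas_kraus_single_row[OF K] by blast
    then show "(\<Sum>a<d. \<Sum>b<d. K$$(x,a) * \<rho>$$(a,b) * cnj (K$$(y,b))) = 0"
      using xy by (cases "x = x\<^sub>0") simp_all
  qed
  finally show ?thesis by simp
qed

lemma MIO_meas_channel: "MIO d (k*d) meas_channel"
  unfolding MIO_def
proof (intro conjI channel_meas_channel allI impI)
  fix \<rho> assume "incoherent d \<rho>"
  then have "density d \<rho>" and "\<rho> \<in> carrier_mat d d"
    by (auto simp: incoherent_def density_def psd_def)
  then show "incoherent (k*d) (meas_channel \<rho>)"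
    using channel_density[OF channel_meas_channel] meas_channel_off_diag by (auto simp: incoherent_def)
qed

lemma meas_channel_proj_\<psi>_diag:
  assumes j: "j < k" and a: "a < d"
  shows "meas_channel (proj (\<psi> j)) $$ (j*d + a, j*d + a) = (if a = 0 then 1 else 0)"
proof -
  let ?x = "j*d + a"
  have x: "?x < k*d" by (rule block_index_less[OF j a])
  define f where "f K = (\<Sum>a'<d. \<Sum>b<d. K$$(?x,a') * proj (\<psi> j) $$(a',b) * cnj (K$$(?x,b)))" for K
  have "meas_channel (proj (\<psi> j)) $$ (?x, ?x) = (\<Sum>i<k. f (kraus_\<psi> i)) + (\<Sum>c<d. f (kraus_perp c))"
    using kraus_map_carrier_entry[OF meas_kraus_carrier proj_\<psi>_carrier[OF j]] x
    by (simp add: meas_channel_def f_def sum_list_meas_kraus)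
  also have "(\<Sum>c<d. f (kraus_perp c)) = 0"
  proof (intro sum.neutral ballI)
    fix c assume c: "c \<in> {..<d}"
    have "f (kraus_perp c) = (if ?x = 0 then (\<Sum>a'<d. perp_proj c a' * \<psi> j $ a') * cnj (\<Sum>b<d. perp_proj c b * \<psi> j $ b) else 0)"
      unfolding f_def using x
      by (auto simp: kraus_perp_def proj_\<psi>_entry[OF j] sum_product cnj_sum mult_ac intro!: sum.cong)
    moreover have "(\<Sum>a'<d. perp_proj c a' * \<psi> j $ a') = 0" using perp_proj_\<psi>[OF j] c by simp
    ultimately show "f (kraus_perp c) = 0" by simp
  qed
  also have "(\<Sum>i<k. f (kraus_\<psi> i)) = (\<Sum>i<k. if i = j \<and> a = 0 then 1 else 0)"
  proof (intro sum.cong refl)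
    fix i assume i: "i \<in> {..<k}"
    have "f (kraus_\<psi> i) = (if ?x = i*d then (\<Sum>a'<d. \<Sum>b<d. (cnj (\<psi> i $ a') * \<psi> j $ a') * (cnj (\<psi> j $ b) * \<psi> i $ b)) else 0)"
      unfolding f_def using x
      by (auto simp: kraus_\<psi>_def proj_\<psi>_entry[OF j] mult_ac intro!: sum.cong)
    also have "\<dots> = (if ?x = i*d then (\<Sum>a'<d. cnj (\<psi> i $ a') * \<psi> j $ a') * (\<Sum>b<d. cnj (\<psi> j $ b) * \<psi> i $ b) else 0)"
      by (simp add: sum_product)
    also have "\<dots> = (if i = j \<and> a = 0 then 1 else 0)"
    proof (cases "i = j")
      case True
      then show ?thesis using inner_\<psi>[OF j j] by auto
    next
      case False
      then show ?thesis using block_index_neq[OF a d_pos, of j i] by simp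
    qed
    finally show "f (kraus_\<psi> i) = (if i = j \<and> a = 0 then 1 else 0)" .
  qed
  finally show ?thesis using j by auto
qed

lemma meas_channel_perfect:
  "(\<Sum>j<k. 1 / real k * Re (tr_proj_B d j (meas_channel (proj (\<psi> j))))) = 1"
  using k_pos d_pos by (simp add: tr_proj_B_def meas_channel_proj_\<psi>_diag)

lemma robustness_ptrace_meas_channel:
  "j < k \<Longrightarrow> robustness d (ptrace_B k d (meas_channel (proj (\<psi> j)))) = 0"
  using channel_density[OF channel_meas_channel density_proj_\<psi>] meas_channel_off_diag proj_\<psi>_carrier
  by (intro robustness_incoherent incoherent_ptrace_B) auto

lemma perfect_tr_diag_block:
  assumes ch: "channel d (k*d) N"
    and perfect: "(\<Sum>j<k. 1 / real k * Re (tr_proj_B d j (N (proj (\<psi> j))))) = 1"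
    and j: "j < k"
  shows "tr (diag_block d j (N (proj (\<psi> j)))) = 1"
proof -
  define u where "u i = Re (tr (diag_block d i (N (proj (\<psi> i)))))" for i
  have dens: "density (k*d) (N (proj (\<psi> i)))" if "i < k" for i
    using channel_density[OF ch density_proj_\<psi>[OF that]] .
  have "(\<Sum>i<k. 1 / real k * (1 - u i)) = 0"
    using perfect k_pos by (simp add: u_def tr_proj_B_eq_tr_diag_block right_diff_distrib sum_subtractf)
  moreover have "0 \<le> 1 / real k * (1 - u i)" if "i < k" for i
    using density_tr_diag_block_le_one[OF dens[OF that] that] by (simp add: u_def)
  ultimately have "1 / real k * (1 - u j) = 0"
    using j by (subst (asm) sum_nonneg_eq_0_iff) auto
  then have "u j = 1" using k_pos by simp
  moreover have "psd (k*d) (N (proj (\<psi> j)))" using dens[OF j] by (simp add: density_def)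
  then have "0 \<le> tr (diag_block d j (N (proj (\<psi> j))))" by (rule psd_tr_nonneg[OF psd_diag_block[OF _ j]])
  ultimately show ?thesis by (metis nonneg_complex_eq_of_real_Re of_real_1 u_def)
qed

lemma diag_block_channel_avg:
  assumes ch: "channel d (k*d) N"
    and perfect: "(\<Sum>j<k. 1 / real k * Re (tr_proj_B d j (N (proj (\<psi> j))))) = 1"
    and j: "j < k"
  shows "diag_block d j (N \<omega>) = complex_of_real (1 / real k) \<cdot>\<^sub>m diag_block d j (N (proj (\<psi> j)))"
proof (rule eq_matI)
  fix a b assume "a < dim_row (complex_of_real (1 / real k) \<cdot>\<^sub>m diag_block d j (N (proj (\<psi> j))))"
    "b < dim_col (complex_of_real (1 / real k) \<cdot>\<^sub>m diag_block d j (N (proj (\<psi> j))))"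
  then have ab: "a < d" "b < d" by (auto simp: diag_block_def)
  have other: "N (proj (\<psi> i)) $$ (j*d + a, j*d + b) = 0" if i: "i < k" "i \<noteq> j" for i
  proof -
    have "diag_block d j (N (proj (\<psi> i))) = 0\<^sub>m d d"
      using density_concentrated_diag_block(1)[OF channel_density[OF ch density_proj_\<psi>[OF i(1)]] i(1)
          perfect_tr_diag_block[OF ch perfect i(1)] j] i(2) by simp
    from arg_cong[OF this, of "\<lambda>M. M $$ (a,b)"] show ?thesis using ab by (simp add: diag_block_def)
  qed
  have "N \<omega> $$ (j*d + a, j*d + b) = (\<Sum>i<k. complex_of_real (1 / real k) * N (proj (\<psi> i)) $$ (j*d + a, j*d + b))"
    by (rule channel_entry_lincomb[OF ch, where A = "\<lambda>i. proj (\<psi> i)"])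
       (auto simp: proj_\<psi>_carrier avg_carrier avg_state_def block_index_less j ab)
  also have "\<dots> = complex_of_real (1 / real k) * N (proj (\<psi> j)) $$ (j*d + a, j*d + b)"
    using j other by (subst sum.remove[of _ j]) (auto intro!: sum.neutral)
  finally show "diag_block d j (N \<omega>) $$ (a,b)
      = (complex_of_real (1 / real k) \<cdot>\<^sub>m diag_block d j (N (proj (\<psi> j)))) $$ (a,b)"
    using ab by (simp add: diag_block_def)
qed (simp_all add: diag_block_def)

text \<open>A robustness witness (s, \<tau>) of \<omega> is pushed through N: since N(\<omega>) restricted to block j
  is \<sigma>_j/k, the incoherence of N((\<omega> + s\<tau>)/(1 + s)) shows that \<sigma>_j + k s T_j is diagonal,
  where T_j is block j of N(\<tau>); the block traces of N(\<tau>) sum to 1.\<close>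
lemma reduced_robustness_le_witness:
  assumes mio: "MIO d (k*d) N"
    and perfect: "(\<Sum>j<k. 1 / real k * Re (tr_proj_B d j (N (proj (\<psi> j))))) = 1"
    and s: "0 \<le> s" and \<tau>: "density d \<tau>"
    and inc: "incoherent d ((1 / (1 + complex_of_real s)) \<cdot>\<^sub>m (\<omega> + complex_of_real s \<cdot>\<^sub>m \<tau>))"
  shows "(\<Sum>j<k. 1 / real k * robustness d (ptrace_B k d (N (proj (\<psi> j))))) \<le> s"
proof -
  define D where "D = (1 / (1 + complex_of_real s)) \<cdot>\<^sub>m (\<omega> + complex_of_real s \<cdot>\<^sub>m \<tau>)"
  define \<sigma> where "\<sigma> j = diag_block d j (N (proj (\<psi> j)))" for j
  define T where "T j = diag_block d j (N \<tau>)" for j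
  have ch: "channel d (k*d) N" using mio by (simp add: MIO_def)
  have \<tau>c: "\<tau> \<in> carrier_mat d d" using \<tau> by (simp add: density_def psd_def)
  have N\<tau>: "density (k*d) (N \<tau>)" by (rule channel_density[OF ch \<tau>])
  have ND: "incoherent (k*d) (N D)" using mio inc by (simp add: MIO_def D_def)
  have concentrated: "ptrace_B k d (N (proj (\<psi> j))) = \<sigma> j" "density d (\<sigma> j)" if "j < k" for j
    using density_concentrated_diag_block(2,3)[OF channel_density[OF ch density_proj_\<psi>[OF that]] that
        perfect_tr_diag_block[OF ch perfect that]] by (simp_all add: \<sigma>_def)
  have off_diag: "\<sigma> j $$ (a,b) + complex_of_real (real k * s) * T j $$ (a,b) = 0"
    if j: "j < k" and ab: "a < d" "b < d" "a \<noteq> b" for j a b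
  proof -
    let ?x = "j*d + a" and ?y = "j*d + b"
    have xy: "?x < k*d" "?y < k*d" "?x \<noteq> ?y" using j ab block_index_less by auto
    have "1 + complex_of_real s \<noteq> 0" using s by (simp add: complex_eq_iff)
    then have "N \<omega> $$ (?x,?y) = (1 + complex_of_real s) * N D $$ (?x,?y) + (- complex_of_real s) * N \<tau> $$ (?x,?y)"
      using \<tau>c avg_carrier xy
      by (intro channel_entry_lincomb2[OF ch _ \<tau>c avg_carrier]) (auto simp: D_def field_simps)
    also have "N D $$ (?x,?y) = 0" using ND xy by (simp add: incoherent_def)
    finally have "complex_of_real (1 / real k) * \<sigma> j $$ (a,b) = - (complex_of_real s * T j $$ (a,b))"
      using arg_cong[OF diag_block_channel_avg[OF ch perfect j], of "\<lambda>M. M $$ (a,b)"] ab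
      by (simp add: \<sigma>_def T_def diag_block_def)
    then show ?thesis using k_pos by (simp add: field_simps)
  qed
  have "robustness d (\<sigma> j) \<le> real k * s * Re (tr (T j))" if j: "j < k" for j
    using concentrated(2)[OF j] psd_diag_block[of k d "N \<tau>" j] N\<tau> s off_diag[OF j] j
    by (intro robustness_le_diagonalising_psd) (auto simp: T_def density_def)
  then have "(\<Sum>j<k. 1 / real k * robustness d (ptrace_B k d (N (proj (\<psi> j)))))
      \<le> (\<Sum>j<k. 1 / real k * (real k * s * Re (tr (T j))))"
    using concentrated(1) by (intro sum_mono mult_left_mono) auto
  also have "\<dots> = s * Re (\<Sum>j<k. tr (T j))" using k_pos by (simp add: sum_distrib_left)
  also have "(\<Sum>j<k. tr (T j)) = 1"
    using N\<tau> by (simp add: T_def density_def psd_def tr_eq_sum_tr_diag_block[symmetric])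
  finally show ?thesis by simp
qed

lemma reduced_robustness_le_robustness_avg:
  assumes "MIO d (k*d) N"
    and "(\<Sum>j<k. 1 / real k * Re (tr_proj_B d j (N (proj (\<psi> j))))) = 1"
  shows "(\<Sum>j<k. 1 / real k * robustness d (ptrace_B k d (N (proj (\<psi> j))))) \<le> robustness d \<omega>"
  by (rule robustness_greatest[OF robustness_avg_witness]) (rule reduced_robustness_le_witness[OF assms])

lemma eta_MIO_bounds:
  shows "0 \<le> eta_MIO k d (\<lambda>_. 1 / real k) (\<lambda>i. proj (\<psi> i))"
    and "eta_MIO k d (\<lambda>_. 1 / real k) (\<lambda>i. proj (\<psi> i)) \<le> robustness d \<omega>"
proof -
  let ?E = "{(\<Sum>j<k. 1 / real k * robustness d (ptrace_B k d (N (proj (\<psi> j))))) | N.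
       MIO d (k*d) N \<and> (\<Sum>j<k. 1 / real k * Re (tr_proj_B d j (N (proj (\<psi> j))))) = 1}"
  have eta: "eta_MIO k d (\<lambda>_. 1 / real k) (\<lambda>i. proj (\<psi> i)) = Sup ?E"
    by (simp add: eta_MIO_def P_suc_eq_one)
  have upper: "x \<le> robustness d \<omega>" if "x \<in> ?E" for x
    using that reduced_robustness_le_robustness_avg by auto
  have zero: "0 \<in> ?E"
    using MIO_meas_channel meas_channel_perfect robustness_ptrace_meas_channel
    by (intro CollectI exI[of _ meas_channel]) simp
  have "bdd_above ?E" using upper by (auto simp: bdd_above_def)
  then show "0 \<le> eta_MIO k d (\<lambda>_. 1 / real k) (\<lambda>i. proj (\<psi> i))"
    unfolding eta by (rule cSup_upper[OF zero])
  show "eta_MIO k d (\<lambda>_. 1 / real k) (\<lambda>i. proj (\<psi> i)) \<le> robustness d \<omega>"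
    unfolding eta by (rule cSup_least) (use zero upper in auto)
qed

end

theorem propositionS1:
  fixes k d :: nat and \<psi> :: "nat \<Rightarrow> complex vec"
  assumes "0 < k" and "k < d"
    and "\<And>i. i < k \<Longrightarrow> \<psi> i \<in> carrier_vec d"
    and "\<And>i. i < k \<Longrightarrow> map_vec cnj (\<psi> i) \<bullet> \<psi> i = 1"
    and "\<And>i j. i < k \<Longrightarrow> j < k \<Longrightarrow> i \<noteq> j \<Longrightarrow> map_vec cnj (\<psi> i) \<bullet> \<psi> j = 0"
    and "C_MIO_ens k d (\<lambda>_. 1 / real k) (\<lambda>i. proj (\<psi> i))
           + S_ens k d (\<lambda>_. 1 / real k) (\<lambda>i. proj (\<psi> i)) = log 2 (real d)"
  shows "C_max d (avg_state k d (\<lambda>_. 1 / real k) (\<lambda>i. proj (\<psi> i)))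
           + vN_entropy d (avg_state k d (\<lambda>_. 1 / real k) (\<lambda>i. proj (\<psi> i))) = log 2 (real d)"
proof -
  interpret orthonormal_ensemble k d \<psi> by unfold_locales (use assms(1-5) in auto)
  define \<eta> where "\<eta> = eta_MIO k d (\<lambda>_. 1 / real k) (\<lambda>i. proj (\<psi> i))"
  have \<eta>: "0 \<le> \<eta>" "\<eta> \<le> robustness d \<omega>" using eta_MIO_bounds by (simp_all add: \<eta>_def)
  have saturated: "log 2 (1 + \<eta>) + log 2 (real k) = log 2 (real d)"
    using assms(6) by (simp add: C_MIO_ens_def S_ens_def vN_entropy_avg \<eta>_def)
  then have "log 2 (1 + \<eta>) = log 2 (real d / real k)"
    using k_pos d_pos by (simp add: log_divide_pos)
  then have "1 + \<eta> = real d / real k"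
    using \<eta>(1) k_pos d_pos inj_onD[OF log_inj[of 2]] by fastforce
  then have "robustness d \<omega> = \<eta>" using robustness_avg_le \<eta>(2) by simp
  then show ?thesis using saturated by (simp add: C_max_def vN_entropy_avg)
qed

end
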